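(* Let $\mathfrak g=\mathfrak{sl}_4(\mathbb C)$ with simple roots $\alpha_1,\alpha_2,\alpha_3$. Let $e=X_{\alpha_1}+X_{\alpha_2+\alpha_3}$, which generates the nilpotent orbit with partition $(3,1)$, and let $h^+=2H_{\alpha_1}+2H_{\alpha_2}+2H_{\alpha_3}$ be the neutral element of its standard $\mathfrak{sl}_2$-triple. Let $\mathfrak n$ be the span of $$H_{\alpha_1},\ H_{\alpha_2+\alpha_3},\ X_{\alpha_1},\ X_{\alpha_2},\ X_{-\alpha_2},\ X_{-\alpha_1},\ X_{-\alpha_3},\ X_{-\alpha_1-\alpha_2},\ X_{-\alpha_2-\alpha_3},\ X_{-\alpha_1-\alpha_2-\alpha_3}.$$ Let $\mathfrak n'$ be the span of the same vectors, except that $H_{\alpha_2+\alpha_3}$ is replaced by $H_{\alpha_2}$. Then $\mathfrak n$ and $\mathfrak n'$ are both $\operatorname{ad}h^+$-invariant complements of $\mathfrak g^e$. The transverse Poisson structure on $N=e+\mathfrak n^\perp$ is polynomial of degree $3$, while the one on $N'=e+\mathfrak n'^\perp$ is polynomial of degree $2$. Hence the degree of the transverse Poisson structure depends on the choice of $\operatorname{ad}h^+$-invariant complement.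
   Context: $(H_\alpha,X_\alpha,X_{-\alpha})$ denote Chevalley basis elements for the root $\alpha$. $K$ is the Killing form and $\mathfrak n^\perp$ is the $K$-orthogonal of $\mathfrak n$. Transverse Poisson structure. Choose a basis $Z_1,\dots,Z_k$ of $\mathfrak g^e$ and a basis $X_1,\dots,X_p$ of the complement $\mathfrak n$. Let $(\overline{Z_i},\overline{X_j})$ be the $K$-dual basis, and identify $\mathfrak n^\perp$ with $\mathbb C^k$ via $q\mapsto\sum_s q_s\overline{Z_s}$. Define: - $C_N(q)_{l,m}=K(e+\sum_s q_s\overline{Z_s},[X_l,X_m])$; - $D_N(q)_{l,j}=K(\sum_s q_s\overline{Z_s},[X_l,Z_j])$; - $A_N(q)_{i,j}=K(\sum_s q_s\overline{Z_s},[Z_i,Z_j])$. Then $\Lambda_N(q)=A_N+{}^tD_N\,C_N^{-1}D_N$. For $\operatorname{ad}h^+$-invariant complements, $\Lambda_N(q)$ is polynomial in $q$. Its degree is the maximal degree of its entries; this does not depend on the chosen bases. *)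

theory Defs
  imports "HOL-Analysis.Analysis"
begin

text \<open>The Lie algebra sl_4(C), realised inside 4x4 complex matrices (indices 0..3 of type 4).\<close>

type_synonym mat4 = "complex^4^4"

definition Em :: "4 \<Rightarrow> 4 \<Rightarrow> mat4" where
  "Em i j = (\<chi> a b. if a = i \<and> b = j then 1 else 0)"

definition brk :: "mat4 \<Rightarrow> mat4 \<Rightarrow> mat4" where
  "brk A B = A ** B - B ** A"

definition smul :: "complex \<Rightarrow> mat4 \<Rightarrow> mat4" where
  "smul c A = (\<chi> i j. c * A $ i $ j)"

definition sl4 :: "mat4 set" where
  "sl4 = {A. trace A = 0}"

text \<open>Killing form: trace of ad X o ad Y.  Computed on gl_4 (basis Em i j); since ad vanishes on
  the centre of gl_4 = sl_4 + C*I, this equals the trace on sl_4 for X, Y in sl_4.\<close>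
definition killing :: "mat4 \<Rightarrow> mat4 \<Rightarrow> complex" where
  "killing X Y = (\<Sum>i\<in>UNIV. \<Sum>j\<in>UNIV. (brk X (brk Y (Em i j))) $ i $ j)"

text \<open>Simple roots alpha_1 = eps_1-eps_2, alpha_2 = eps_2-eps_3,
  alpha_3 = eps_3-eps_4 (eps_1..eps_4 correspond to indices 0..3).\<close>
definition Hr :: "4 \<Rightarrow> 4 \<Rightarrow> mat4" where
  "Hr i j = Em i i - Em j j"

abbreviation "H_a1 \<equiv> Hr 0 1"
abbreviation "H_a2 \<equiv> Hr 1 2"
abbreviation "H_a3 \<equiv> Hr 2 3"
abbreviation "H_a23 \<equiv> Hr 1 3"
abbreviation "X_a1 \<equiv> Em 0 1"
abbreviation "X_a2 \<equiv> Em 1 2"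
abbreviation "X_a23 \<equiv> Em 1 3"
abbreviation "X_ma1 \<equiv> Em 1 0"
abbreviation "X_ma2 \<equiv> Em 2 1"
abbreviation "X_ma3 \<equiv> Em 3 2"
abbreviation "X_ma12 \<equiv> Em 2 0"
abbreviation "X_ma23 \<equiv> Em 3 1"
abbreviation "X_ma123 \<equiv> Em 3 0"

definition e_nil :: mat4 where "e_nil = X_a1 + X_a23"

definition h_plus :: mat4 where
  "h_plus = smul 2 H_a1 + smul 2 H_a2 + smul 2 H_a3"

definition cspan :: "mat4 list \<Rightarrow> mat4 set" where
  "cspan vs = {A. \<exists>c::nat \<Rightarrow> complex. A = (\<Sum>i<length vs. smul (c i) (vs ! i))}"

definition n_compl :: "mat4 set" where
  "n_compl = cspan [H_a1, H_a23, X_a1, X_a2, X_ma2, X_ma1, X_ma3, X_ma12, X_ma23, X_ma123]"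

definition n_compl' :: "mat4 set" where
  "n_compl' = cspan [H_a1, H_a2, X_a1, X_a2, X_ma2, X_ma1, X_ma3, X_ma12, X_ma23, X_ma123]"

definition centralizer :: "mat4 \<Rightarrow> mat4 set" where
  "centralizer e = {A \<in> sl4. brk e A = 0}"

definition csubspace :: "mat4 set \<Rightarrow> bool" where
  "csubspace S \<longleftrightarrow> 0 \<in> S \<and> (\<forall>A\<in>S. \<forall>B\<in>S. A + B \<in> S) \<and> (\<forall>c. \<forall>A\<in>S. smul c A \<in> S)"

definition is_complement :: "mat4 set \<Rightarrow> mat4 set \<Rightarrow> bool" where
  "is_complement n V \<longleftrightarrow> csubspace n \<and> n \<subseteq> sl4 \<and> n \<inter> V = {0} \<and>
     {A + B | A B. A \<in> n \<and> B \<in> V} = sl4"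

definition ad_invariant :: "mat4 \<Rightarrow> mat4 set \<Rightarrow> bool" where
  "ad_invariant h n \<longleftrightarrow> (\<forall>A\<in>n. brk h A \<in> n)"

definition is_basis :: "('i::finite \<Rightarrow> mat4) \<Rightarrow> mat4 set \<Rightarrow> bool" where
  "is_basis B S \<longleftrightarrow>
     (\<forall>c. (\<Sum>i\<in>UNIV. smul (c i) (B i)) = 0 \<longrightarrow> (\<forall>i. c i = 0)) \<and>
     S = {A. \<exists>c. A = (\<Sum>i\<in>UNIV. smul (c i) (B i))}"

text \<open>The matrices C_N, D_N, A_N and Lambda_N; Zb is the K-dual family (Zbar_s), q in C^k.\<close>
definition CN :: "('k::finite \<Rightarrow> mat4) \<Rightarrow> ('p::finite \<Rightarrow> mat4) \<Rightarrow> complex^'k \<Rightarrow> complex^'p^'p" where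
  "CN Zb X q = (\<chi> l m. killing (e_nil + (\<Sum>s\<in>UNIV. smul (q $ s) (Zb s))) (brk (X l) (X m)))"

definition DN :: "('k::finite \<Rightarrow> mat4) \<Rightarrow> ('p::finite \<Rightarrow> mat4) \<Rightarrow> ('k \<Rightarrow> mat4) \<Rightarrow> complex^'k \<Rightarrow> complex^'k^'p" where
  "DN Zb X Z q = (\<chi> l j. killing (\<Sum>s\<in>UNIV. smul (q $ s) (Zb s)) (brk (X l) (Z j)))"

definition AN :: "('k::finite \<Rightarrow> mat4) \<Rightarrow> ('k \<Rightarrow> mat4) \<Rightarrow> complex^'k \<Rightarrow> complex^'k^'k" where
  "AN Zb Z q = (\<chi> i j. killing (\<Sum>s\<in>UNIV. smul (q $ s) (Zb s)) (brk (Z i) (Z j)))"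

definition LambdaN :: "('k::finite \<Rightarrow> mat4) \<Rightarrow> ('p::finite \<Rightarrow> mat4) \<Rightarrow> ('k \<Rightarrow> mat4) \<Rightarrow> complex^'k \<Rightarrow> complex^'k^'k" where
  "LambdaN Zb X Z q = AN Zb Z q + transpose (DN Zb X Z q) ** matrix_inv (CN Zb X q) ** DN Zb X Z q"

definition dual_part :: "('k::finite \<Rightarrow> mat4) \<Rightarrow> ('k \<Rightarrow> mat4) \<Rightarrow> ('p::finite \<Rightarrow> mat4) \<Rightarrow> bool" where
  "dual_part Zb Z X \<longleftrightarrow> (\<forall>s. Zb s \<in> sl4) \<and>
     (\<forall>s i. killing (Zb s) (Z i) = (if s = i then 1 else 0)) \<and> (\<forall>s l. killing (Zb s) (X l) = 0)"

definition poly_deg_le_on :: "(complex^'k::finite) set \<Rightarrow> (complex^'k \<Rightarrow> complex) \<Rightarrow> nat \<Rightarrow> bool" where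
  "poly_deg_le_on S f d \<longleftrightarrow> (\<exists>c :: ('k \<Rightarrow> nat) \<Rightarrow> complex.
     finite {a. c a \<noteq> 0} \<and> (\<forall>a. c a \<noteq> 0 \<longrightarrow> (\<Sum>i\<in>UNIV. a i) \<le> d) \<and>
     (\<forall>q\<in>S. f q = (\<Sum>a\<in>{a. c a \<noteq> 0}. c a * (\<Prod>i\<in>UNIV. (q $ i) ^ a i))))"

definition mat_poly_degree_on :: "(complex^'k::finite) set \<Rightarrow> (complex^'k \<Rightarrow> complex^'m::finite^'n::finite) \<Rightarrow> nat \<Rightarrow> bool" where
  "mat_poly_degree_on S L d \<longleftrightarrow> (\<forall>i j. poly_deg_le_on S (\<lambda>q. L q $ i $ j) d) \<and>
     (d > 0 \<longrightarrow> \<not> (\<forall>i j. poly_deg_le_on S (\<lambda>q. L q $ i $ j) (d - 1)))"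

definition transverse_degree :: "'k::finite itself \<Rightarrow> 'p::finite itself \<Rightarrow> mat4 set \<Rightarrow> nat \<Rightarrow> bool" where
  "transverse_degree _ _ n d \<longleftrightarrow>
     (\<exists>(Z::'k \<Rightarrow> mat4) (X::'p \<Rightarrow> mat4) Zb. is_basis Z (centralizer e_nil) \<and> is_basis X n \<and>
        dual_part Zb Z X) \<and>
     (\<forall>(Z::'k \<Rightarrow> mat4) (X::'p \<Rightarrow> mat4) Zb. is_basis Z (centralizer e_nil) \<longrightarrow> is_basis X n \<longrightarrow>
        dual_part Zb Z X \<longrightarrow>
        mat_poly_degree_on {q. invertible (CN Zb X q)} (LambdaN Zb X Z) d)"

end

theory Submission
  imports Defs "HOL-Computational_Algebra.Polynomial"
begin

text \<open>The library enumerates the numeral types as \<open>1, \<dots>, n\<close>; here indices start at \<open>0\<close>.\<close>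

lemma exhaust_idx4: fixes x :: 4 shows "x = 0 \<or> x = 1 \<or> x = 2 \<or> x = 3"
proof (induct x)
  case (of_int z)
  then have "z = 0 \<or> z = 1 \<or> z = 2 \<or> z = 3" by (simp; presburger)
  then show ?case by auto
qed

lemma exhaust_idx5: fixes x :: 5 shows "x = 0 \<or> x = 1 \<or> x = 2 \<or> x = 3 \<or> x = 4"
proof (induct x)
  case (of_int z)
  then have "z = 0 \<or> z = 1 \<or> z = 2 \<or> z = 3 \<or> z = 4" by (simp; presburger)
  then show ?case by auto
qed

lemma exhaust_idx10:
  fixes x :: 10 shows "x = 0 \<or> x = 1 \<or> x = 2 \<or> x = 3 \<or> x = 4 \<or> x = 5 \<or> x = 6 \<or> x = 7 \<or> x = 8 \<or> x = 9"
proof (induct x)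
  case (of_int z)
  then have "z = 0 \<or> z = 1 \<or> z = 2 \<or> z = 3 \<or> z = 4 \<or> z = 5 \<or> z = 6 \<or> z = 7 \<or> z = 8 \<or> z = 9"
    by (simp; presburger)
  then show ?case by auto
qed

lemma forall_idx4: "(\<forall>i::4. P i) \<longleftrightarrow> P 0 \<and> P 1 \<and> P 2 \<and> P 3"
  by (metis exhaust_idx4)

lemma forall_idx5: "(\<forall>i::5. P i) \<longleftrightarrow> P 0 \<and> P 1 \<and> P 2 \<and> P 3 \<and> P 4"
  by (metis exhaust_idx5)

lemma forall_idx10:
  "(\<forall>i::10. P i) \<longleftrightarrow> P 0 \<and> P 1 \<and> P 2 \<and> P 3 \<and> P 4 \<and> P 5 \<and> P 6 \<and> P 7 \<and> P 8 \<and> P 9"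
  by (metis exhaust_idx10)

lemma sum_idx4: "sum f (UNIV::4 set) = f 0 + f 1 + f 2 + f 3"
proof -
  have U: "(UNIV::4 set) = {0, 1, 2, 3}" using exhaust_idx4 by auto
  show ?thesis unfolding U by (simp add: ac_simps)
qed

lemma sum_idx5: "sum f (UNIV::5 set) = f 0 + f 1 + f 2 + f 3 + f 4"
proof -
  have U: "(UNIV::5 set) = {0, 1, 2, 3, 4}" using exhaust_idx5 by auto
  show ?thesis unfolding U by (simp add: ac_simps)
qed

lemma sum_idx10: "sum f (UNIV::10 set) = f 0 + f 1 + f 2 + f 3 + f 4 + f 5 + f 6 + f 7 + f 8 + f 9"
proof -
  have U: "(UNIV::10 set) = {0, 1, 2, 3, 4, 5, 6, 7, 8, 9}" using exhaust_idx10 by auto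
  show ?thesis unfolding U by (simp add: ac_simps)
qed

lemma mat4_eq_iff: "(A::mat4) = B \<longleftrightarrow> (\<forall>i j. A $ i $ j = B $ i $ j)"
  by (simp add: vec_eq_iff)

lemma smul_apply [simp]: "smul c A $ i $ j = c * A $ i $ j"
  by (simp add: smul_def)

lemma smul_add_right: "smul c (A + B) = smul c A + smul c B"
  by (simp add: mat4_eq_iff distrib_left)

lemma smul_diff_right: "smul c (A - B) = smul c A - smul c B"
  by (simp add: mat4_eq_iff algebra_simps)

lemma smul_add_left: "smul (a + b) A = smul a A + smul b A"
  by (simp add: mat4_eq_iff distrib_right)

lemma smul_diff_left: "smul (a - b) A = smul a A - smul b A"
  by (simp add: mat4_eq_iff algebra_simps)

lemma smul_smul [simp]: "smul a (smul b A) = smul (a * b) A"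
  by (simp add: mat4_eq_iff)

lemma smul_zero_right [simp]: "smul c 0 = 0"
  and smul_zero_left [simp]: "smul 0 A = 0"
  and smul_one [simp]: "smul 1 A = A"
  by (simp_all add: mat4_eq_iff)

lemma smul_sum_right: "smul c (sum f S) = (\<Sum>x\<in>S. smul c (f x))"
  by (simp add: mat4_eq_iff sum_distrib_left)

lemma smul_sum_left: "smul (sum c S) A = (\<Sum>x\<in>S. smul (c x) A)"
  by (simp add: mat4_eq_iff sum_distrib_right)

lemma matrix_mult_entry: "((A::mat4) ** B) $ i $ j = (\<Sum>k\<in>UNIV. A $ i $ k * B $ k $ j)"
  by (simp add: matrix_matrix_mult_def)

lemma matrix_mult_add_left: "((A::mat4) + B) ** C = A ** C + B ** C"
  and matrix_mult_add_right: "C ** ((A::mat4) + B) = C ** A + C ** B"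
  and matrix_mult_diff_left: "((A::mat4) - B) ** C = A ** C - B ** C"
  and matrix_mult_diff_right: "C ** ((A::mat4) - B) = C ** A - C ** B"
  by (simp_all add: mat4_eq_iff matrix_mult_entry sum.distrib sum_subtractf algebra_simps)

lemma matrix_mult_smul_left: "smul c A ** B = smul c (A ** B)"
  and matrix_mult_smul_right: "A ** smul c B = smul c (A ** B)"
  by (simp_all add: mat4_eq_iff matrix_mult_entry sum_distrib_left algebra_simps)

lemma trace_smul: "trace (smul c A) = c * trace A"
  by (simp add: trace_def sum_distrib_left)

lemma brk_add_left: "brk (A + B) C = brk A C + brk B C"
  and brk_add_right: "brk A (B + C) = brk A B + brk A C"
  by (simp_all add: brk_def matrix_mult_add_left matrix_mult_add_right)

lemma brk_diff_right: "brk A (B - C) = brk A B - brk A C"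
  by (simp add: brk_def matrix_mult_diff_left matrix_mult_diff_right)

lemma brk_smul_left: "brk (smul c A) B = smul c (brk A B)"
  and brk_smul_right: "brk A (smul c B) = smul c (brk A B)"
  by (simp_all add: mat4_eq_iff brk_def matrix_mult_entry sum_distrib_left algebra_simps)

lemma brk_antisym: "brk A B = - brk B A"
  by (simp add: brk_def)

lemma brk_zero_left [simp]: "brk 0 A = 0"
  and brk_zero_right [simp]: "brk A 0 = 0"
  by (simp_all add: brk_def)

lemma brk_sum_left: "brk (sum f S) C = (\<Sum>i\<in>S. brk (f i) C)"
  by (rule sum_comp_morphism[unfolded comp_def, symmetric]) (simp_all add: brk_add_left)

lemma brk_sum_right: "brk C (sum f S) = (\<Sum>i\<in>S. brk C (f i))"
  by (rule sum_comp_morphism[unfolded comp_def, symmetric]) (simp_all add: brk_add_right)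

lemma trace_brk [simp]: "trace (brk A B) = 0"
  by (simp add: brk_def trace_sub trace_mul_sym[of A B])

section \<open>The Killing form\<close>

lemma matrix_mult_Em_right: "((A::mat4) ** Em i j) $ a $ b = (if b = j then A $ a $ i else 0)"
  by (simp add: matrix_mult_entry Em_def if_distrib[of "\<lambda>x. _ * x"] cong: if_cong)

lemma matrix_mult_Em_left: "(Em i j ** (A::mat4)) $ a $ b = (if a = i then A $ j $ b else 0)"
  by (simp add: matrix_mult_entry Em_def if_distrib[of "\<lambda>x. x * _"] cong: if_cong)

lemma ad_ad_Em_entry:
  "brk X (brk Y (Em i j)) $ i $ j =
     (X ** Y) $ i $ i - X $ i $ i * Y $ j $ j - Y $ i $ i * X $ j $ j + (Y ** X) $ j $ j"
proof -
  have "brk X (brk Y (Em i j)) $ i $ j =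
    (\<Sum>k\<in>UNIV. X $ i $ k * (Y $ k $ i - (if k = i then Y $ j $ j else 0))) -
    (\<Sum>k\<in>UNIV. ((if k = j then Y $ i $ i else 0) - Y $ j $ k) * X $ k $ j)"
    by (simp add: brk_def matrix_mult_entry[of X] matrix_mult_entry[of _ X]
        matrix_mult_Em_right matrix_mult_Em_left)
  also have "\<dots> = (X ** Y) $ i $ i - X $ i $ i * Y $ j $ j - Y $ i $ i * X $ j $ j + (Y ** X) $ j $ j"
    by (simp add: matrix_mult_entry algebra_simps sum_subtractf if_distrib[of "\<lambda>x. _ * x"]
        if_distrib[of "\<lambda>x. x * _"] cong: if_cong)
  finally show ?thesis .
qed

lemma killing_formula: "killing X Y = 8 * trace (X ** Y) - 2 * trace X * trace Y"
proof -
  have "killing X Y = (\<Sum>i\<in>UNIV. \<Sum>j\<in>UNIV.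
      (X ** Y) $ i $ i - X $ i $ i * Y $ j $ j - Y $ i $ i * X $ j $ j + (Y ** X) $ j $ j)"
    by (simp add: killing_def ad_ad_Em_entry)
  also have "\<dots> = 4 * trace (X ** Y) - trace X * trace Y - trace Y * trace X + 4 * trace (Y ** X)"
    by (simp add: sum.distrib sum_subtractf trace_def sum_product sum_distrib_left[symmetric])
  finally show ?thesis by (simp add: trace_mul_sym[of Y X])
qed

lemma killing_sym: "killing X Y = killing Y X"
  by (simp add: killing_formula trace_mul_sym[of X Y])

lemma killing_add_left: "killing (A + B) C = killing A C + killing B C"
  and killing_add_right: "killing C (A + B) = killing C A + killing C B"
  and killing_diff_left: "killing (A - B) C = killing A C - killing B C"
  and killing_diff_right: "killing C (A - B) = killing C A - killing C B"
  by (simp_all add: killing_formula matrix_mult_add_left matrix_mult_add_right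
      matrix_mult_diff_left matrix_mult_diff_right trace_add trace_sub algebra_simps)

lemma killing_smul_left: "killing (smul c A) B = c * killing A B"
  and killing_smul_right: "killing A (smul c B) = c * killing A B"
  by (simp_all add: killing_formula matrix_mult_smul_left matrix_mult_smul_right trace_smul
      algebra_simps)

lemma killing_zero_left [simp]: "killing 0 A = 0"
  and killing_zero_right [simp]: "killing A 0 = 0"
  by (simp_all add: killing_formula trace_def)

lemma killing_uminus_left: "killing (- A) C = - killing A C"
  and killing_uminus_right: "killing C (- A) = - killing C A"
  using killing_diff_left[of 0 A C] killing_diff_right[of C 0 A] by simp_all

lemma killing_sum_left: "killing (sum f S) C = (\<Sum>i\<in>S. killing (f i) C)"
  by (rule sum_comp_morphism[unfolded comp_def, symmetric]) (simp_all add: killing_add_left)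

lemma killing_sum_right: "killing C (sum f S) = (\<Sum>i\<in>S. killing C (f i))"
  by (rule sum_comp_morphism[unfolded comp_def, symmetric]) (simp_all add: killing_add_right)

lemma killing_invariant: "killing A (brk B C) = killing (brk A B) C"
proof -
  have "trace (A ** (C ** B)) = trace ((B ** A) ** C)"
    by (metis matrix_mul_assoc trace_mul_sym)
  then show ?thesis
    by (simp add: killing_formula brk_def matrix_mult_diff_left matrix_mult_diff_right trace_sub
        matrix_mul_assoc trace_mul_sym[of "A ** B - B ** A" C] trace_mul_sym[of "B ** A" C]
        trace_mul_sym[of B C] trace_mul_sym[of B A])
qed

lemma trace_Em: "trace (Em a b) = (if a = b then 1 else 0)"
  by (cases "a = b") (auto simp: trace_def Em_def intro!: sum.neutral)

lemma trace_Em_mult: "trace (Em a b ** Y) = Y $ b $ a"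
  by (simp add: trace_def matrix_mult_Em_left)

lemma killing_Em_left: "killing (Em a b) Y = 8 * Y $ b $ a - 2 * (if a = b then 1 else 0) * trace Y"
  by (simp add: killing_formula trace_Em_mult trace_Em)

lemma sl4_add: "A \<in> sl4 \<Longrightarrow> B \<in> sl4 \<Longrightarrow> A + B \<in> sl4"
  and sl4_diff: "A \<in> sl4 \<Longrightarrow> B \<in> sl4 \<Longrightarrow> A - B \<in> sl4"
  and sl4_smul: "A \<in> sl4 \<Longrightarrow> smul c A \<in> sl4"
  and sl4_brk: "brk A B \<in> sl4"
  by (simp_all add: sl4_def trace_add trace_sub trace_smul)

lemma sl4_zero: "0 \<in> sl4"
  by (simp add: sl4_def trace_def)

lemma sl4_sum: "(\<And>i. i \<in> I \<Longrightarrow> f i \<in> sl4) \<Longrightarrow> sum f I \<in> sl4"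
  by (induct I rule: infinite_finite_induct) (auto intro: sl4_add sl4_zero)

lemma killing_nondegenerate:
  assumes Y: "Y \<in> sl4" and K: "\<forall>W\<in>sl4. killing W Y = 0"
  shows "Y = 0"
proof -
  have off_diagonal: "Y $ i $ j = 0" if "i \<noteq> j" for i j
  proof -
    have "Em j i \<in> sl4" using that by (simp add: sl4_def trace_Em)
    then show ?thesis using K that by (auto simp: killing_Em_left)
  qed
  have diagonal: "Y $ i $ i = Y $ 0 $ 0" for i
  proof -
    have "Em i i - Em 0 0 \<in> sl4" by (simp add: sl4_def trace_sub trace_Em)
    then show ?thesis using K by (auto simp: killing_diff_left killing_Em_left)
  qed
  have "4 * Y $ 0 $ 0 = 0"
    using Y diagonal[of 1] diagonal[of 2] diagonal[of 3] by (simp add: sl4_def trace_def sum_idx4)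
  then show ?thesis using off_diagonal diagonal by (simp add: mat4_eq_iff) metis
qed

section \<open>Polynomial functions of bounded total degree\<close>

inductive polyfun_le :: "(complex^'k::finite \<Rightarrow> complex) \<Rightarrow> nat \<Rightarrow> bool" where
  const: "polyfun_le (\<lambda>q. c) d"
| mono: "polyfun_le f d \<Longrightarrow> d \<le> d' \<Longrightarrow> polyfun_le f d'"
| add: "polyfun_le f d \<Longrightarrow> polyfun_le g d \<Longrightarrow> polyfun_le (\<lambda>q. f q + g q) d"
| var_mult: "polyfun_le f d \<Longrightarrow> polyfun_le (\<lambda>q. q $ i * f q) (Suc d)"

lemma polyfun_le_cmult: "polyfun_le f d \<Longrightarrow> polyfun_le (\<lambda>q. c * f q) d"
proof (induction rule: polyfun_le.induct)
  case (add f d g)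
  then show ?case using polyfun_le.add[of "\<lambda>q. c * f q" d "\<lambda>q. c * g q"] by (simp add: distrib_left)
next
  case (var_mult f d i)
  then show ?case using polyfun_le.var_mult[of "\<lambda>q. c * f q" d i] by (simp add: ac_simps)
qed (auto intro: polyfun_le.const polyfun_le.mono)

lemma polyfun_le_multc: "polyfun_le f d \<Longrightarrow> polyfun_le (\<lambda>q. f q * c) d"
  using polyfun_le_cmult[of f d c] by (simp add: mult.commute)

lemma polyfun_le_mult: "polyfun_le f d1 \<Longrightarrow> polyfun_le g d2 \<Longrightarrow> polyfun_le (\<lambda>q. f q * g q) (d1 + d2)"
proof (induction arbitrary: d2 rule: polyfun_le.induct)
  case (const c d)
  then show ?case using polyfun_le_cmult[of g d2 c] polyfun_le.mono by fastforce
next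
  case (mono f d d')
  then show ?case using polyfun_le.mono by (metis add_le_mono1)
next
  case (add f d g')
  then show ?case
    using polyfun_le.add[of "\<lambda>q. f q * g q" "d + d2" "\<lambda>q. g' q * g q"] by (simp add: distrib_right)
next
  case (var_mult f d i)
  then show ?case using polyfun_le.var_mult[of "\<lambda>q. f q * g q" "d + d2" i] by (simp add: ac_simps)
qed

lemma polyfun_le_var: "polyfun_le (\<lambda>q. q $ i) (Suc 0)"
  using polyfun_le.var_mult[OF polyfun_le.const[of 1 0], of i] by simp

lemma polyfun_le_uminus: "polyfun_le f d \<Longrightarrow> polyfun_le (\<lambda>q. - f q) d"
  using polyfun_le_cmult[of f d "- 1"] by simp

lemma polyfun_le_diff: "polyfun_le f d \<Longrightarrow> polyfun_le g d \<Longrightarrow> polyfun_le (\<lambda>q. f q - g q) d"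
  using polyfun_le.add[OF _ polyfun_le_uminus, of f d g] by simp

lemma polyfun_le_divide: "polyfun_le f d \<Longrightarrow> polyfun_le (\<lambda>q. f q / c) d"
  using polyfun_le_multc[of f d "inverse c"] by (simp add: field_simps)

lemma polyfun_le_mult_var: "polyfun_le f (d - 1) \<Longrightarrow> 0 < d \<Longrightarrow> polyfun_le (\<lambda>q. f q * q $ i) d"
  using polyfun_le.var_mult[of f "d - 1" i] by (simp add: mult.commute)

lemma polyfun_le_var_pos: "0 < d \<Longrightarrow> polyfun_le (\<lambda>q. q $ i) d"
  using polyfun_le.mono[OF polyfun_le_var, of d i] by simp

lemma polyfun_le_sum:
  "finite S \<Longrightarrow> (\<And>i. i \<in> S \<Longrightarrow> polyfun_le (f i) d) \<Longrightarrow> polyfun_le (\<lambda>q. \<Sum>i\<in>S. f i q) d"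
  by (induction S rule: finite_induct) (auto intro: polyfun_le.const polyfun_le.add)

lemma polyfun_le_affine: "polyfun_le (\<lambda>q. a + (\<Sum>s\<in>UNIV. b s * q $ s)) (Suc 0)"
  by (intro polyfun_le.add[OF polyfun_le.const] polyfun_le_sum)
    (simp_all add: polyfun_le_cmult[OF polyfun_le_var])

lemma polyfun_le_prod:
  "finite S \<Longrightarrow> (\<And>i. i \<in> S \<Longrightarrow> polyfun_le (f i) (d i)) \<Longrightarrow>
     polyfun_le (\<lambda>q. \<Prod>i\<in>S. f i q) (\<Sum>i\<in>S. d i)"
  by (induction S rule: finite_induct) (auto intro: polyfun_le.const polyfun_le_mult)

lemma polyfun_le_var_power: "polyfun_le (\<lambda>q. q $ i ^ n) n"
  by (induction n) (simp_all add: polyfun_le.const polyfun_le.var_mult)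

lemma polyfun_le_linear_subst:
  "polyfun_le f d \<Longrightarrow> polyfun_le (\<lambda>q. f ((Q::complex^'k::finite^'l::finite) *v q)) d"
proof (induction rule: polyfun_le.induct)
  case (var_mult f d i)
  have "polyfun_le (\<lambda>q. (Q *v q) $ i) (Suc 0)"
    unfolding matrix_vector_mult_def
    by (simp add: polyfun_le_sum polyfun_le_cmult polyfun_le_var)
  from polyfun_le_mult[OF this var_mult.IH] show ?case by simp
qed (auto intro: polyfun_le.const polyfun_le.mono polyfun_le.add)

lemma polyfun_le_det:
  assumes "\<And>i j. polyfun_le (\<lambda>q. M q $ i $ j) d"
  shows "\<exists>N. polyfun_le (\<lambda>q. det (M q :: complex^'n::finite^'n)) N"
proof -
  have "polyfun_le (\<lambda>q. \<Sum>p\<in>{p. p permutes (UNIV::'n set)}.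
          of_int (sign p) * (\<Prod>i\<in>UNIV. M q $ i $ p i)) (\<Sum>i\<in>(UNIV::'n set). d)"
    by (intro polyfun_le_sum polyfun_le_cmult polyfun_le_prod assms) (simp_all add: finite_permutations)
  then show ?thesis unfolding det_def by blast
qed

lemma polyfun_le_on_line: "polyfun_le f d \<Longrightarrow> \<exists>p. degree p \<le> d \<and> (\<forall>t. f (t *s v) = poly p t)"
proof (induction rule: polyfun_le.induct)
  case (const c d)
  show ?case by (rule exI[of _ "[:c:]"]) simp
next
  case (mono f d d')
  then show ?case by (meson le_trans)
next
  case (add f d g)
  then obtain p1 p2 where "degree p1 \<le> d" "\<forall>t. f (t *s v) = poly p1 t"
    "degree p2 \<le> d" "\<forall>t. g (t *s v) = poly p2 t"
    by blast
  then show ?case by (intro exI[of _ "p1 + p2"]) (auto intro: degree_add_le)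
next
  case (var_mult f d i)
  then obtain p where p: "degree p \<le> d" "\<forall>t. f (t *s v) = poly p t" by blast
  have "degree ([:0, v $ i:] * p) \<le> Suc d"
    using degree_mult_le[of "[:0, v $ i:]" p] p(1) by (simp add: degree_pCons_eq_if)
  then show ?case using p(2) by (intro exI[of _ "[:0, v $ i:] * p"]) (auto simp: algebra_simps)
qed

definition monomial :: "('k::finite \<Rightarrow> nat) \<Rightarrow> complex^'k \<Rightarrow> complex" where
  "monomial a q = (\<Prod>i\<in>UNIV. (q $ i) ^ a i)"

lemma monomial_zero [simp]: "monomial (\<lambda>_. 0) q = 1"
  by (simp add: monomial_def)

lemma monomial_incr: "monomial (a(i := Suc (a i))) q = q $ i * monomial a q"
proof -
  have "monomial (a(i := Suc (a i))) q = (\<Prod>j\<in>UNIV. q $ j ^ a j * (if j = i then q $ j else 1))"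
    unfolding monomial_def by (rule prod.cong) auto
  then show ?thesis by (simp add: prod.distrib monomial_def mult.commute)
qed

lemma sum_incr: "(\<Sum>j\<in>UNIV. (a(i := Suc (a i))) j) = Suc (\<Sum>j\<in>(UNIV::'k::finite set). a j)"
proof -
  have "(\<Sum>j\<in>UNIV. (a(i := Suc (a i))) j) = (\<Sum>j\<in>UNIV. a j + (if j = i then 1 else 0))"
    by (rule sum.cong) auto
  then show ?thesis by (simp add: sum.distrib)
qed

lemma polyfun_le_monomial_sum:
  assumes "polyfun_le f d"
  shows "\<exists>A c. finite A \<and> (\<forall>a\<in>A. (\<Sum>i\<in>UNIV. a i) \<le> d) \<and>
    (\<forall>q. f q = (\<Sum>a\<in>A. c a * monomial a (q::complex^'k::finite)))"
  using assms
proof (induction rule: polyfun_le.induct)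
  case (const c d)
  show ?case by (rule exI[of _ "{\<lambda>_. 0}"], rule exI[of _ "\<lambda>_. c"]) simp
next
  case (mono f d d')
  then show ?case by (meson le_trans)
next
  case (add f d g)
  from add.IH(1) obtain A a where fin_A: "finite A" and deg_A: "\<forall>x\<in>A. (\<Sum>i\<in>UNIV. x i) \<le> d"
    and f: "\<forall>q. f q = (\<Sum>x\<in>A. a x * monomial x q)"
    by blast
  from add.IH(2) obtain B b where fin_B: "finite B" and deg_B: "\<forall>x\<in>B. (\<Sum>i\<in>UNIV. x i) \<le> d"
    and g: "\<forall>q. g q = (\<Sum>x\<in>B. b x * monomial x q)"
    by blast
  let ?c = "\<lambda>x. (if x \<in> A then a x else 0) + (if x \<in> B then b x else 0)"
  have "f q + g q = (\<Sum>x\<in>A \<union> B. ?c x * monomial x q)" for q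
  proof -
    have "(\<Sum>x\<in>A \<union> B. ?c x * monomial x q) =
        (\<Sum>x\<in>A \<union> B. if x \<in> A then a x * monomial x q else 0) +
        (\<Sum>x\<in>A \<union> B. if x \<in> B then b x * monomial x q else 0)"
      by (simp add: distrib_right sum.distrib if_distrib[of "\<lambda>y. y * _"] cong: if_cong)
    also have "\<dots> = f q + g q"
      using fin_A fin_B by (simp add: sum.If_cases Int_absorb2 Int_absorb1 f g)
    finally show ?thesis by simp
  qed
  then show ?case using fin_A fin_B deg_A deg_B by (intro exI[of _ "A \<union> B"] exI[of _ ?c]) auto
next
  case (var_mult f d i)
  then obtain A c where A: "finite A" "\<forall>x\<in>A. (\<Sum>i\<in>UNIV. x i) \<le> d"
    and f: "\<forall>q. f q = (\<Sum>x\<in>A. c x * monomial x q)"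
    by blast
  define incr where "incr x = x(i := Suc (x i))" for x :: "'k \<Rightarrow> nat"
  have "inj incr" unfolding incr_def inj_def by (metis fun_upd_same fun_upd_triv fun_upd_upd diff_Suc_1)
  have "q $ i * f q = (\<Sum>x\<in>incr ` A. c (x(i := x i - 1)) * monomial x q)" for q
  proof -
    have "(\<Sum>x\<in>incr ` A. c (x(i := x i - 1)) * monomial x q) = (\<Sum>x\<in>A. c x * monomial (incr x) q)"
      using \<open>inj incr\<close> by (simp add: sum.reindex inj_on_subset) (simp add: incr_def)
    also have "\<dots> = q $ i * f q"
      by (simp add: f sum_distrib_left incr_def monomial_incr ac_simps)
    finally show ?thesis by simp
  qed
  moreover have "\<forall>x\<in>incr ` A. (\<Sum>j\<in>UNIV. x j) \<le> Suc d"
    using A(2) by (auto simp: incr_def sum_incr simp del: fun_upd_apply)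
  ultimately show ?case using A(1) by (intro exI[of _ "incr ` A"] exI) auto
qed

lemma polyfun_le_imp_poly_deg_le_on:
  assumes "polyfun_le f d"
  shows "poly_deg_le_on S f d"
proof -
  obtain A c where A: "finite A" "\<forall>a\<in>A. (\<Sum>i\<in>UNIV. a i) \<le> d"
    and f: "\<forall>q. f q = (\<Sum>a\<in>A. c a * monomial a q)"
    using polyfun_le_monomial_sum[OF assms] by blast
  define c' where "c' a = (if a \<in> A then c a else 0)" for a
  have supp: "{a. c' a \<noteq> 0} \<subseteq> A" by (auto simp: c'_def split: if_splits)
  have fin: "finite {a. c' a \<noteq> 0}" using A(1) supp by (rule finite_subset[rotated])
  have deg: "\<forall>a. c' a \<noteq> 0 \<longrightarrow> (\<Sum>i\<in>UNIV. a i) \<le> d" using A(2) by (simp add: c'_def)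
  have "f q = (\<Sum>a\<in>{a. c' a \<noteq> 0}. c' a * monomial a q)" for q
  proof -
    have "(\<Sum>a\<in>{a. c' a \<noteq> 0}. c' a * monomial a q) = (\<Sum>a\<in>A. c' a * monomial a q)"
      by (rule sum.mono_neutral_left[OF A(1) supp]) auto
    also have "\<dots> = (\<Sum>a\<in>A. c a * monomial a q)" by (simp add: c'_def)
    finally show ?thesis using f by simp
  qed
  then show ?thesis unfolding poly_deg_le_on_def monomial_def using fin deg by blast
qed

lemma poly_deg_le_on_imp_polyfun_le:
  fixes f :: "complex^'k::finite \<Rightarrow> complex"
  assumes "poly_deg_le_on S f d"
  shows "\<exists>g. polyfun_le g d \<and> (\<forall>q\<in>S. f q = g q)"
proof -
  from assms obtain c :: "('k \<Rightarrow> nat) \<Rightarrow> complex" where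
    c: "finite {a. c a \<noteq> 0}" "\<forall>a. c a \<noteq> 0 \<longrightarrow> (\<Sum>i\<in>UNIV. a i) \<le> d"
       "\<forall>q\<in>S. f q = (\<Sum>a\<in>{a. c a \<noteq> 0}. c a * (\<Prod>i\<in>UNIV. (q $ i) ^ a i))"
    unfolding poly_deg_le_on_def by blast
  have "polyfun_le (\<lambda>q. \<Sum>a\<in>{a. c a \<noteq> 0}. c a * (\<Prod>i\<in>UNIV. (q $ i) ^ a i)) d"
  proof (intro polyfun_le_sum polyfun_le_cmult c(1))
    fix a assume "a \<in> {a. c a \<noteq> 0}"
    moreover have "polyfun_le (\<lambda>q. \<Prod>i\<in>UNIV. (q $ i) ^ a i) (\<Sum>i\<in>UNIV. a i)"
      by (rule polyfun_le_prod) (auto intro: polyfun_le_var_power)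
    ultimately show "polyfun_le (\<lambda>q. \<Prod>i\<in>UNIV. (q $ i) ^ a i) d"
      using c(2) by (auto intro: polyfun_le.mono)
  qed
  then show ?thesis using c(3) by blast
qed

lemma poly_deg_le_on_cong:
  fixes f g :: "complex^'k::finite \<Rightarrow> complex"
  assumes "\<And>q. q \<in> S \<Longrightarrow> f q = g q" and "poly_deg_le_on S g d"
  shows "poly_deg_le_on S f d"
proof -
  obtain c :: "('k \<Rightarrow> nat) \<Rightarrow> complex" where "finite {a. c a \<noteq> 0}"
    "\<forall>a. c a \<noteq> 0 \<longrightarrow> (\<Sum>i\<in>UNIV. a i) \<le> d"
    "\<forall>q\<in>S. g q = (\<Sum>a\<in>{a. c a \<noteq> 0}. c a * (\<Prod>i\<in>UNIV. (q $ i) ^ a i))"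
    using assms(2) unfolding poly_deg_le_on_def by blast
  then show ?thesis unfolding poly_deg_le_on_def using assms(1) by (intro exI[of _ c]) auto
qed

definition span_of :: "('i::finite \<Rightarrow> mat4) \<Rightarrow> mat4 set" where
  "span_of B = {A. \<exists>c. A = (\<Sum>i\<in>UNIV. smul (c i) (B i))}"

definition basis_coord :: "('i::finite \<Rightarrow> mat4) \<Rightarrow> mat4 \<Rightarrow> 'i \<Rightarrow> complex" where
  "basis_coord B A = (SOME c. A = (\<Sum>i\<in>UNIV. smul (c i) (B i)))"

lemma is_basis_iff:
  "is_basis B S \<longleftrightarrow> (\<forall>c. (\<Sum>i\<in>UNIV. smul (c i) (B i)) = 0 \<longrightarrow> (\<forall>i. c i = 0)) \<and> S = span_of B"
  by (simp add: is_basis_def span_of_def)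

lemma basis_coord:
  assumes "is_basis B S" "A \<in> S"
  shows "A = (\<Sum>i\<in>UNIV. smul (basis_coord B A i) (B i))"
proof -
  have "\<exists>c. A = (\<Sum>i\<in>UNIV. smul (c i) (B i))" using assms by (simp add: is_basis_def)
  then show ?thesis unfolding basis_coord_def by (rule someI_ex)
qed

lemma sum_smul_delta: "(\<Sum>j\<in>UNIV. smul (if i = j then 1 else 0) (B j)) = (B (i::'i::finite) :: mat4)"
proof -
  have "(\<Sum>j\<in>UNIV. smul (if i = j then 1 else 0) (B j)) = (\<Sum>j\<in>UNIV. if i = j then B j else 0)"
    by (rule sum.cong) auto
  then show ?thesis by (simp add: sum.delta')
qed

lemma basis_lincomb_mem: "is_basis B S \<Longrightarrow> (\<Sum>i\<in>UNIV. smul (c i) (B i)) \<in> S"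
  by (auto simp add: is_basis_def)

lemma basis_mem: "is_basis B S \<Longrightarrow> B i \<in> S"
  using basis_lincomb_mem[of B S "\<lambda>j. if i = j then 1 else 0"] by (simp add: sum_smul_delta)

lemma basis_indep: "is_basis B S \<Longrightarrow> (\<Sum>i\<in>UNIV. smul (c i) (B i)) = 0 \<Longrightarrow> c i = 0"
  by (simp add: is_basis_def)

lemma csubspace_sum: "csubspace S \<Longrightarrow> (\<And>i. i \<in> I \<Longrightarrow> f i \<in> S) \<Longrightarrow> sum f I \<in> S"
  by (induct I rule: infinite_finite_induct) (auto simp: csubspace_def)

lemma csubspace_smul: "csubspace S \<Longrightarrow> A \<in> S \<Longrightarrow> smul c A \<in> S"
  by (simp add: csubspace_def)

lemma csubspace_span_of: "csubspace (span_of B)"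
  unfolding csubspace_def span_of_def
proof (intro conjI ballI allI)
  show "(0::mat4) \<in> {A. \<exists>c. A = (\<Sum>i\<in>UNIV. smul (c i) (B i))}"
    by (intro CollectI exI[of _ "\<lambda>i. 0"]) simp
next
  fix X Y assume "X \<in> {A. \<exists>c. A = (\<Sum>i\<in>UNIV. smul (c i) (B i))}" "Y \<in> {A. \<exists>c. A = (\<Sum>i\<in>UNIV. smul (c i) (B i))}"
  then obtain a b where "X = (\<Sum>i\<in>UNIV. smul (a i) (B i))" "Y = (\<Sum>i\<in>UNIV. smul (b i) (B i))" by blast
  then have "X + Y = (\<Sum>i\<in>UNIV. smul (a i + b i) (B i))" by (simp add: smul_add_left sum.distrib)
  then show "X + Y \<in> {A. \<exists>c. A = (\<Sum>i\<in>UNIV. smul (c i) (B i))}"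
    by (intro CollectI exI[of _ "\<lambda>i. a i + b i"]) (simp only:)
next
  fix k X assume "X \<in> {A. \<exists>c. A = (\<Sum>i\<in>UNIV. smul (c i) (B i))}"
  then obtain a where "X = (\<Sum>i\<in>UNIV. smul (a i) (B i))" by blast
  then have "smul k X = (\<Sum>i\<in>UNIV. smul (k * a i) (B i))" by (simp add: smul_sum_right)
  then show "smul k X \<in> {A. \<exists>c. A = (\<Sum>i\<in>UNIV. smul (c i) (B i))}"
    by (intro CollectI exI[of _ "\<lambda>i. k * a i"]) (simp only:)
qed

lemma cspan_eq_span_of:
  fixes B :: "'i::finite \<Rightarrow> mat4"
  assumes bij: "bij_betw \<iota> {..<length vs} UNIV" and B: "\<And>k. k < length vs \<Longrightarrow> B (\<iota> k) = vs ! k"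
  shows "cspan vs = span_of B"
proof (intro set_eqI iffI)
  fix A assume "A \<in> cspan vs"
  then obtain c where "A = (\<Sum>k<length vs. smul (c k) (vs ! k))" by (auto simp: cspan_def)
  also have "\<dots> = (\<Sum>k<length vs. smul (c (inv_into {..<length vs} \<iota> (\<iota> k))) (B (\<iota> k)))"
    using bij by (intro sum.cong refl) (simp add: B bij_betw_imp_inj_on)
  also have "\<dots> = (\<Sum>i\<in>UNIV. smul (c (inv_into {..<length vs} \<iota> i)) (B i))"
    by (rule sum.reindex_bij_betw[OF bij])
  finally show "A \<in> span_of B" by (auto simp: span_of_def)
next
  fix A assume "A \<in> span_of B"
  then obtain c where "A = (\<Sum>i\<in>UNIV. smul (c i) (B i))" by (auto simp: span_of_def)
  also have "\<dots> = (\<Sum>k<length vs. smul (c (\<iota> k)) (vs ! k))"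
    by (simp add: sum.reindex_bij_betw[OF bij, symmetric] B)
  finally show "A \<in> cspan vs" by (auto simp: cspan_def)
qed

lemma is_complement_spanI:
  assumes sl4: "\<And>i. B i \<in> sl4" and V: "csubspace V" "V \<subseteq> sl4"
    and trivial: "\<And>c. (\<Sum>i\<in>UNIV. smul (c i) (B i)) \<in> V \<Longrightarrow> (\<Sum>i\<in>UNIV. smul (c i) (B i)) = 0"
    and decompose: "\<And>A. A \<in> sl4 \<Longrightarrow> \<exists>C\<in>V. A - C \<in> span_of B"
  shows "is_complement (span_of B) V"
  unfolding is_complement_def
proof (intro conjI)
  show "csubspace (span_of B)" by (rule csubspace_span_of)
  show span_sl4: "span_of B \<subseteq> sl4" by (auto simp: span_of_def intro!: sl4_sum sl4_smul sl4)
  show "span_of B \<inter> V = {0}"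
    using trivial V(1) csubspace_span_of[of B] by (auto simp: span_of_def csubspace_def)
  show "{N + C |N C. N \<in> span_of B \<and> C \<in> V} = sl4"
  proof (intro equalityI subsetI)
    fix A assume "A \<in> {N + C |N C. N \<in> span_of B \<and> C \<in> V}"
    then show "A \<in> sl4" using span_sl4 V(2) by (auto intro: sl4_add)
  next
    fix A assume "A \<in> sl4"
    then obtain C where "C \<in> V" "A - C \<in> span_of B" using decompose by blast
    then show "A \<in> {N + C |N C. N \<in> span_of B \<and> C \<in> V}" by force
  qed
qed

lemma ad_invariant_span_of:
  assumes "\<And>i. \<exists>\<mu>. brk h (B i) = smul \<mu> (B i)"
  shows "ad_invariant h (span_of B)"
  unfolding ad_invariant_def
proof
  obtain \<mu> where \<mu>: "\<And>i. brk h (B i) = smul (\<mu> i) (B i)" using assms by metis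
  fix A assume "A \<in> span_of B"
  then obtain c where "A = (\<Sum>i\<in>UNIV. smul (c i) (B i))" by (auto simp: span_of_def)
  then have "brk h A = (\<Sum>i\<in>UNIV. smul (c i * \<mu> i) (B i))"
    by (simp add: brk_sum_right brk_smul_right \<mu> mult.commute)
  then show "brk h A \<in> span_of B" unfolding span_of_def by (auto intro!: exI[of _ "\<lambda>i. c i * \<mu> i"])
qed

lemma brk_diagonal_Em:
  assumes "\<And>i j. i \<noteq> j \<Longrightarrow> D $ i $ j = 0"
  shows "brk D (Em a b) = smul (D $ a $ a - D $ b $ b) (Em a b)"
proof -
  have "brk D (Em a b) $ i $ j = (if j = b then D $ i $ a else 0) - (if i = a then D $ b $ j else 0)"
    for i j by (simp add: brk_def matrix_mult_Em_left matrix_mult_Em_right)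
  then show ?thesis by (auto simp: mat4_eq_iff Em_def assms)
qed

lemma brk_diagonal_Hr:
  assumes "\<And>i j. i \<noteq> j \<Longrightarrow> D $ i $ j = 0"
  shows "brk D (Hr a b) = 0"
  using brk_diagonal_Em[OF assms, of a a] brk_diagonal_Em[OF assms, of b b]
  by (simp add: Hr_def brk_diff_right)

lemma ad_invariant_span_of_diagonal:
  assumes "\<And>i j. i \<noteq> j \<Longrightarrow> D $ i $ j = 0"
    and "\<And>i. \<exists>a b. B i = Em a b \<or> B i = Hr a b"
  shows "ad_invariant D (span_of B)"
proof (rule ad_invariant_span_of)
  fix i
  obtain a b where "B i = Em a b \<or> B i = Hr a b" using assms(2) by blast
  then show "\<exists>\<mu>. brk D (B i) = smul \<mu> (B i)"
    using brk_diagonal_Em[OF assms(1)] brk_diagonal_Hr[OF assms(1)] smul_zero_left by metis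
qed

section \<open>The transverse Poisson matrix\<close>

definition slice_point :: "('k::finite \<Rightarrow> mat4) \<Rightarrow> complex^'k \<Rightarrow> mat4" where
  "slice_point Zb q = e_nil + (\<Sum>s\<in>UNIV. smul (q $ s) (Zb s))"

lemma killing_e_brk_centralizer:
  assumes "Z \<in> centralizer e"
  shows "killing e (brk Y Z) = 0"
proof -
  have "killing e (brk Y Z) = - killing (brk e Z) Y"
    by (subst brk_antisym) (simp add: killing_uminus_right killing_invariant)
  then show ?thesis using assms by (simp add: centralizer_def)
qed

lemma CN_entry: "CN Zb X q $ l $ m = killing (slice_point Zb q) (brk (X l) (X m))"
  by (simp add: CN_def slice_point_def)

lemma DN_entry:
  "Z j \<in> centralizer e_nil \<Longrightarrow> DN Zb X Z q $ l $ j = killing (slice_point Zb q) (brk (X l) (Z j))"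
  by (simp add: DN_def slice_point_def killing_add_left killing_e_brk_centralizer)

lemma AN_entry:
  "Z j \<in> centralizer e_nil \<Longrightarrow> AN Zb Z q $ i $ j = killing (slice_point Zb q) (brk (Z i) (Z j))"
  by (simp add: AN_def slice_point_def killing_add_left killing_e_brk_centralizer)

lemma killing_brk_lincomb:
  "killing x (brk (Z + (\<Sum>l\<in>UNIV. smul (b l) (X l))) Y) =
     killing x (brk Z Y) + (\<Sum>l\<in>UNIV. b l * killing x (brk (X l) Y))"
  by (simp add: brk_add_left brk_sum_left brk_smul_left killing_add_right killing_sum_right
      killing_smul_right)

lemma matrix_inv_left:
  fixes A :: "'a::field^'n^'n"
  assumes "invertible A" shows "matrix_inv A ** A = mat 1"
proof -
  have "\<exists>A'. A ** A' = mat 1 \<and> A' ** A = mat 1" using assms by (simp add: invertible_def)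
  then show ?thesis unfolding matrix_inv_def by (rule someI2_ex) blast
qed

lemma matrix_mul_uminus_left: "(- A) ** B = - (A ** (B::'a::comm_ring_1^'n^'m))"
  and matrix_mul_uminus_right: "A ** (- B) = - (A ** (B::'a::comm_ring_1^'n^'m))"
  and transpose_uminus: "transpose (- A) = - transpose A"
  by (simp_all add: vec_eq_iff matrix_matrix_mult_def transpose_def sum_negf)

text \<open>If every \<open>Z i\<close> is corrected by an element of \<open>n\<close> so that it becomes \<open>K\<close>-orthogonal to
  \<open>[x, X m]\<close> for all \<open>m\<close>, the Schur complement defining \<open>Lambda_N\<close> collapses to the bracket of
  the corrected elements.\<close>

lemma LambdaN_eq_killing_corrected:
  fixes Z :: "'k::finite \<Rightarrow> mat4" and X :: "'p::finite \<Rightarrow> mat4" and \<beta> :: "'k \<Rightarrow> 'p \<Rightarrow> complex"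
  assumes Z: "\<And>j. Z j \<in> centralizer e_nil"
    and inv: "invertible (CN Zb X q)"
    and orth: "\<And>i m. killing (slice_point Zb q) (brk (Z i + (\<Sum>l\<in>UNIV. smul (\<beta> i l) (X l))) (X m)) = 0"
  shows "LambdaN Zb X Z q $ i $ j =
    killing (slice_point Zb q) (brk (Z i + (\<Sum>l\<in>UNIV. smul (\<beta> i l) (X l))) (Z j))"
proof -
  define C where "C = CN Zb X q"
  define D where "D = DN Zb X Z q"
  define B :: "complex^'k^'p" where "B = (\<chi> l i. \<beta> i l)"
  have C_antisym: "C $ l $ m = - C $ m $ l" for l m
    unfolding C_def CN_entry by (subst brk_antisym) (simp add: killing_uminus_right)
  have D_entry: "killing (slice_point Zb q) (brk (Z i) (X m)) = - D $ m $ i" for i m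
    unfolding D_def DN_entry[OF Z] by (subst brk_antisym) (simp add: killing_uminus_right)
  have "D $ m $ i = - (C ** B) $ m $ i" for m i
  proof -
    have "(C ** B) $ m $ i = (\<Sum>l\<in>UNIV. - (\<beta> i l * C $ l $ m))"
      unfolding matrix_matrix_mult_def B_def
      by (simp, intro sum.cong refl) (subst C_antisym, simp)
    also have "\<dots> = - D $ m $ i"
      using orth[of i m] by (simp add: killing_brk_lincomb D_entry C_def CN_entry sum_negf add_eq_0_iff)
    finally show ?thesis by simp
  qed
  then have D_eq: "D = - (C ** B)" by (simp add: vec_eq_iff)
  have "matrix_inv C ** D = - B"
    using inv by (simp add: D_eq C_def matrix_inv_left matrix_mul_uminus_right matrix_mul_assoc)
  moreover have "transpose D = transpose B ** C"
  proof -
    have "transpose C = - C" by (simp add: vec_eq_iff transpose_def) (metis C_antisym)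
    then show ?thesis
      by (simp add: D_eq transpose_uminus matrix_transpose_mul matrix_mul_uminus_right)
  qed
  ultimately have "transpose D ** (matrix_inv C ** D) = transpose B ** D"
    by (simp add: D_eq matrix_mul_uminus_right matrix_mul_assoc)
  then have "LambdaN Zb X Z q = AN Zb Z q + transpose B ** D"
    by (simp add: LambdaN_def C_def D_def matrix_mul_assoc)
  then show ?thesis
    by (simp add: killing_brk_lincomb AN_entry Z D_def DN_entry matrix_matrix_mult_def
        transpose_def B_def)
qed

text \<open>\<open>C_N(0)\<close> is invertible: a vector in its kernel gives \<open>y \<in> n\<close> with \<open>K(e, [w, y]) = 0\<close> for
  all \<open>w \<in> n\<close>, hence, as \<open>K(e, [g^e, y]) = 0\<close> anyway, \<open>[e, y] \<perp> sl_4\<close>; so \<open>y \<in> n \<inter> g^e = 0\<close>.\<close>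

lemma CN_zero_invertible:
  assumes compl: "is_complement n (centralizer e_nil)" and X: "is_basis X n"
  shows "invertible (CN Zb X 0)"
proof -
  have "\<beta> = 0" if ker: "CN Zb X 0 *v \<beta> = 0" for \<beta>
  proof -
    define y where "y = (\<Sum>m\<in>UNIV. smul (\<beta> $ m) (X m))"
    have y: "y \<in> n" unfolding y_def by (rule basis_lincomb_mem[OF X])
    have "killing e_nil (brk (X l) y) = 0" for l
      using ker unfolding vec_eq_iff
      by (simp add: matrix_vector_mult_def CN_entry slice_point_def y_def brk_sum_right
          brk_smul_right killing_sum_right killing_smul_right ac_simps)
    then have n_orth: "killing e_nil (brk w y) = 0" if "w \<in> n" for w
      by (subst basis_coord[OF X that])
        (simp add: brk_sum_left brk_smul_left killing_sum_right killing_smul_right)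
    have "killing w (brk e_nil y) = 0" if "w \<in> sl4" for w
    proof -
      obtain N G where "N \<in> n" "G \<in> centralizer e_nil" "w = N + G"
        using compl \<open>w \<in> sl4\<close> unfolding is_complement_def by blast
      moreover have "killing e_nil (brk G y) = 0"
        using \<open>G \<in> centralizer e_nil\<close> by (simp add: killing_invariant centralizer_def)
      ultimately have "killing e_nil (brk w y) = 0"
        by (simp add: brk_add_left killing_add_right n_orth)
      have "killing w (brk e_nil y) = killing (brk w e_nil) y" by (rule killing_invariant)
      also have "\<dots> = - killing (brk e_nil w) y" by (subst brk_antisym) (simp add: killing_uminus_left)
      also have "\<dots> = - killing e_nil (brk w y)" by (simp add: killing_invariant)
      finally show ?thesis using \<open>killing e_nil (brk w y) = 0\<close> by simp
    qed
    then have "brk e_nil y = 0" using killing_nondegenerate sl4_brk by blast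
    moreover have "n \<subseteq> sl4" "n \<inter> centralizer e_nil = {0}" using compl by (auto simp: is_complement_def)
    ultimately have "y = 0" using y by (auto simp: centralizer_def)
    then show "\<beta> = 0" using basis_indep[OF X] unfolding y_def by (simp add: vec_eq_iff)
  qed
  then show ?thesis using matrix_left_invertible_ker invertible_left_inverse by blast
qed

text \<open>\<open>det C_N\<close> restricted to a line through \<open>0\<close> is a polynomial that does not vanish at \<open>0\<close>.\<close>

lemma CN_invertible_on_line:
  assumes "invertible (CN Zb X 0)"
  shows "infinite {t. invertible (CN Zb X (t *s v))}"
proof -
  have "polyfun_le (\<lambda>q. CN Zb X q $ l $ m) (Suc 0)" for l m
  proof -
    have "CN Zb X q $ l $ m = killing e_nil (brk (X l) (X m)) +
        (\<Sum>s\<in>UNIV. killing (Zb s) (brk (X l) (X m)) * q $ s)" for q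
      by (simp add: CN_def killing_add_left killing_sum_left killing_smul_left mult.commute)
    then show ?thesis by (simp only: polyfun_le_affine)
  qed
  then obtain N where "polyfun_le (\<lambda>q. det (CN Zb X q)) N" using polyfun_le_det by blast
  then obtain p where p: "\<forall>t. det (CN Zb X (t *s v)) = poly p t" using polyfun_le_on_line by blast
  have "poly p 0 \<noteq> 0" using p[rule_format, of 0] assms by (simp add: invertible_det_nz)
  then have "p \<noteq> 0" by auto
  then have roots: "finite {t. poly p t = 0}" by (rule poly_roots_finite)
  have "{t. invertible (CN Zb X (t *s v))} = UNIV - {t. poly p t = 0}"
    using p by (auto simp: invertible_det_nz)
  then show ?thesis using Diff_infinite_finite[OF roots infinite_UNIV_char_0] by simp
qed

section \<open>Certifying the degree of the transverse Poisson structure\<close>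

text \<open>A certificate for a complement \<open>n\<close>: reference bases \<open>Z0\<close> of \<open>g^e\<close> and \<open>X0\<close> of \<open>n\<close> with
  \<open>K\<close>-dual family \<open>Zb0\<close>, and for every \<open>q\<close> elements \<open>U q k \<in> Z0 k + n\<close> that are \<open>K\<close>-orthogonal
  to \<open>[x, n]\<close> at \<open>x = slice_point Zb0 q\<close>. By the Schur complement lemma above, the brackets
  \<open>R q\<close> of the \<open>U q k\<close> form \<open>Lambda_N\<close> in the reference bases.\<close>

locale transverse_certificate =
  fixes n :: "mat4 set"
    and X0 :: "'p::finite \<Rightarrow> mat4" and Z0 :: "'k::finite \<Rightarrow> mat4" and Zb0 :: "'k \<Rightarrow> mat4"
    and U :: "complex^'k \<Rightarrow> 'k \<Rightarrow> mat4" and R :: "complex^'k \<Rightarrow> complex^'k^'k"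
    and d :: nat
  assumes Z0_basis: "is_basis Z0 (centralizer e_nil)"
    and X0_basis: "is_basis X0 n"
    and complement: "is_complement n (centralizer e_nil)"
    and Zb0_dual: "dual_part Zb0 Z0 X0"
    and corrected_mem: "\<And>q k. U q k - Z0 k \<in> n"
    and corrected_orth: "\<And>q k m. killing (slice_point Zb0 q) (brk (U q k) (X0 m)) = 0"
    and corrected_brk: "\<And>q k l. killing (slice_point Zb0 q) (brk (U q k) (Z0 l)) = R q $ k $ l"
    and R_degree: "\<And>k l. polyfun_le (\<lambda>q. R q $ k $ l) d"
    and R_top_degree: "\<exists>k l w c. c \<noteq> 0 \<and> (\<forall>t. R (t *s w) $ k $ l = c * t ^ d)"
begin

lemma killing_zero_on_sl4:
  assumes "\<And>l. killing (X0 l) Y = 0" "\<And>k. killing (Z0 k) Y = 0" "W \<in> sl4"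
  shows "killing W Y = 0"
proof -
  obtain N G where "N \<in> n" "G \<in> centralizer e_nil" and W: "W = N + G"
    using complement \<open>W \<in> sl4\<close> unfolding is_complement_def by blast
  obtain a b where "N = (\<Sum>l\<in>UNIV. smul (a l) (X0 l))" "G = (\<Sum>k\<in>UNIV. smul (b k) (Z0 k))"
    using basis_coord[OF X0_basis \<open>N \<in> n\<close>] basis_coord[OF Z0_basis \<open>G \<in> centralizer e_nil\<close>]
    by blast
  then show ?thesis by (simp add: W killing_add_left killing_sum_left killing_smul_left assms)
qed

lemma dual_expansion:
  assumes Y: "Y \<in> sl4" and orth: "\<And>l. killing Y (X0 l) = 0"
  shows "Y = (\<Sum>t\<in>UNIV. smul (killing Y (Z0 t)) (Zb0 t))"
proof -
  define Y' where "Y' = Y - (\<Sum>t\<in>UNIV. smul (killing Y (Z0 t)) (Zb0 t))"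
  have "Y' \<in> sl4"
    using Zb0_dual unfolding Y'_def dual_part_def by (intro sl4_diff Y sl4_sum sl4_smul) auto
  moreover have "killing W Y' = 0" if "W \<in> sl4" for W
  proof (rule killing_zero_on_sl4[OF _ _ that])
    show "killing (X0 l) Y' = 0" for l
      using Zb0_dual orth by (simp add: Y'_def killing_diff_right killing_sum_right
          killing_smul_right dual_part_def killing_sym[of "X0 l"])
    show "killing (Z0 k) Y' = 0" for k
      using Zb0_dual by (simp add: Y'_def killing_diff_right killing_sum_right killing_smul_right
          dual_part_def killing_sym[of "Z0 k"] if_distrib[of "\<lambda>x. _ * x"] cong: if_cong)
  qed
  ultimately have "Y' = 0" using killing_nondegenerate by blast
  then show ?thesis by (simp add: Y'_def)
qed

lemma corrected_orth_n: "y \<in> n \<Longrightarrow> killing (slice_point Zb0 q) (brk (U q k) y) = 0"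
  by (subst basis_coord[OF X0_basis, of y])
    (simp_all add: brk_sum_right brk_smul_right killing_sum_right killing_smul_right corrected_orth)

end

text \<open>Any other bases differ from the reference ones by constant invertible matrices; \<open>Pmat\<close>
  expresses \<open>Z\<close> in \<open>Z0\<close> and \<open>Qmat\<close> expresses \<open>Z0\<close> in \<open>Z\<close>.\<close>

locale transverse_certificate_bases = transverse_certificate n X0 Z0 Zb0 U R d
  for n and X0 :: "'p::finite \<Rightarrow> mat4" and Z0 :: "'k::finite \<Rightarrow> mat4" and Zb0 U R d +
  fixes Z :: "'k \<Rightarrow> mat4" and X :: "'p \<Rightarrow> mat4" and Zb :: "'k \<Rightarrow> mat4"
  assumes Z_basis: "is_basis Z (centralizer e_nil)" and X_basis: "is_basis X n"
    and Zb_dual: "dual_part Zb Z X"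
begin

definition Pmat :: "complex^'k^'k" where "Pmat = (\<chi> i k. basis_coord Z0 (Z i) k)"

definition Qmat :: "complex^'k^'k" where "Qmat = (\<chi> k i. basis_coord Z (Z0 k) i)"

lemma Z_expansion: "Z i = (\<Sum>k\<in>UNIV. smul (Pmat $ i $ k) (Z0 k))"
  unfolding Pmat_def by (simp add: basis_coord[OF Z0_basis basis_mem[OF Z_basis], symmetric])

lemma Z0_expansion: "Z0 k = (\<Sum>i\<in>UNIV. smul (Qmat $ k $ i) (Z i))"
  unfolding Qmat_def by (simp add: basis_coord[OF Z_basis basis_mem[OF Z0_basis], symmetric])

lemma Qmat_Pmat: "Qmat ** Pmat = mat 1"
proof -
  have "(\<Sum>j\<in>UNIV. smul ((Qmat ** Pmat) $ k $ j - mat 1 $ k $ j) (Z0 j)) = 0" for k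
  proof -
    have "Z0 k = (\<Sum>i\<in>UNIV. \<Sum>j\<in>UNIV. smul (Qmat $ k $ i * Pmat $ i $ j) (Z0 j))"
      by (subst Z0_expansion) (simp add: Z_expansion smul_sum_right)
    also have "\<dots> = (\<Sum>j\<in>UNIV. smul ((Qmat ** Pmat) $ k $ j) (Z0 j))"
      by (subst sum.swap) (simp add: matrix_matrix_mult_def smul_sum_left)
    finally show ?thesis
      by (simp add: smul_diff_left sum_subtractf mat_def sum_smul_delta)
  qed
  then have "(Qmat ** Pmat) $ k $ j - mat 1 $ k $ j = 0" for k j by (rule basis_indep[OF Z0_basis])
  then show ?thesis by (simp add: vec_eq_iff)
qed

lemma Zb_expansion: "Zb s = (\<Sum>t\<in>UNIV. smul (Qmat $ t $ s) (Zb0 t))"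
proof -
  have "killing (Zb s) (Z0 t) = Qmat $ t $ s" for t
    using Zb_dual by (subst Z0_expansion) (simp add: killing_sum_right killing_smul_right
        dual_part_def if_distrib[of "\<lambda>x. _ * x"] cong: if_cong)
  moreover have "killing (Zb s) (X0 l) = 0" for l
    using Zb_dual by (subst basis_coord[OF X_basis basis_mem[OF X0_basis]])
      (simp add: killing_sum_right killing_smul_right dual_part_def)
  moreover have "Zb s \<in> sl4" using Zb_dual by (simp add: dual_part_def)
  ultimately show ?thesis using dual_expansion[of "Zb s"] by simp
qed

lemma slice_point_change: "slice_point Zb q = slice_point Zb0 (Qmat *v q)"
proof -
  have "(\<Sum>s\<in>UNIV. smul (q $ s) (Zb s)) = (\<Sum>s\<in>UNIV. \<Sum>t\<in>UNIV. smul (q $ s * Qmat $ t $ s) (Zb0 t))"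
    by (simp add: Zb_expansion smul_sum_right)
  also have "\<dots> = (\<Sum>t\<in>UNIV. smul ((Qmat *v q) $ t) (Zb0 t))"
    by (subst sum.swap) (simp add: matrix_vector_mult_def smul_sum_left ac_simps)
  finally show ?thesis by (simp add: slice_point_def)
qed

lemma LambdaN_change:
  assumes inv: "invertible (CN Zb X q)"
  shows "LambdaN Zb X Z q = Pmat ** R (Qmat *v q) ** transpose Pmat"
proof -
  define q' where "q' = Qmat *v q"
  define V where "V i = (\<Sum>k\<in>UNIV. smul (Pmat $ i $ k) (U q' k - Z0 k))" for i
  have "V i \<in> n" for i
    using complement corrected_mem unfolding V_def is_complement_def
    by (intro csubspace_sum csubspace_smul) auto
  then have V: "V i = (\<Sum>l\<in>UNIV. smul (basis_coord X (V i) l) (X l))" for i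
    using basis_coord[OF X_basis] by blast
  define \<beta> where "\<beta> i l = basis_coord X (V i) l" for i l
  have "(\<Sum>l\<in>UNIV. smul (\<beta> i l) (X l)) = V i" for i
    unfolding \<beta>_def by (rule V[symmetric])
  then have corrected: "Z i + (\<Sum>l\<in>UNIV. smul (\<beta> i l) (X l)) = (\<Sum>k\<in>UNIV. smul (Pmat $ i $ k) (U q' k))"
    for i by (simp add: V_def Z_expansion[of i] smul_diff_right sum_subtractf)
  have orth: "killing (slice_point Zb q) (brk (Z i + (\<Sum>l\<in>UNIV. smul (\<beta> i l) (X l))) (X m)) = 0"
    for i m unfolding corrected slice_point_change q'_def[symmetric]
    by (simp add: brk_sum_left brk_smul_left killing_sum_right killing_smul_right
        corrected_orth_n basis_mem[OF X_basis])
  have "LambdaN Zb X Z q $ i $ j = (Pmat ** R q' ** transpose Pmat) $ i $ j" for i j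
  proof -
    have "LambdaN Zb X Z q $ i $ j =
        killing (slice_point Zb q) (brk (Z i + (\<Sum>l\<in>UNIV. smul (\<beta> i l) (X l))) (Z j))"
      by (intro LambdaN_eq_killing_corrected basis_mem[OF Z_basis] inv orth)
    also have "\<dots> = (\<Sum>l\<in>UNIV. Pmat $ j $ l * (\<Sum>k\<in>UNIV. Pmat $ i $ k * R q' $ k $ l))"
      unfolding corrected slice_point_change q'_def[symmetric]
      by (subst Z_expansion[of j]) (simp add: brk_sum_left brk_smul_left brk_sum_right
          brk_smul_right killing_sum_right killing_smul_right corrected_brk)
    also have "\<dots> = (Pmat ** R q' ** transpose Pmat) $ i $ j"
      by (simp add: matrix_matrix_mult_def transpose_def mult.commute)
    finally show ?thesis .
  qed
  then show ?thesis by (simp add: vec_eq_iff q'_def)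
qed

lemma LambdaN_degree_le:
  "poly_deg_le_on {q. invertible (CN Zb X q)} (\<lambda>q. LambdaN Zb X Z q $ i $ j) d"
proof -
  have "polyfun_le (\<lambda>q. \<Sum>l\<in>UNIV. (\<Sum>k\<in>UNIV. Pmat $ i $ k * R (Qmat *v q) $ k $ l) * Pmat $ j $ l) d"
    by (intro polyfun_le_sum polyfun_le_multc polyfun_le_cmult polyfun_le_linear_subst R_degree) auto
  then have "poly_deg_le_on {q. invertible (CN Zb X q)}
      (\<lambda>q. \<Sum>l\<in>UNIV. (\<Sum>k\<in>UNIV. Pmat $ i $ k * R (Qmat *v q) $ k $ l) * Pmat $ j $ l) d"
    by (rule polyfun_le_imp_poly_deg_le_on)
  then show ?thesis
    by (rule poly_deg_le_on_cong[rotated]) (simp add: LambdaN_change matrix_matrix_mult_def transpose_def)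
qed

text \<open>On a line along which the top-degree part of \<open>R\<close> survives, a bound of degree \<open>d - 1\<close> for
  \<open>Lambda_N\<close> on the invertibility locus would give a polynomial of degree \<open>< d\<close> agreeing with
  \<open>c t^d\<close> at infinitely many points.\<close>

lemma LambdaN_degree_not_le:
  assumes "d > 0"
  shows "\<not> (\<forall>i j. poly_deg_le_on {q. invertible (CN Zb X q)} (\<lambda>q. LambdaN Zb X Z q $ i $ j) (d - 1))"
proof
  let ?S = "{q. invertible (CN Zb X q)}"
  assume "\<forall>i j. poly_deg_le_on ?S (\<lambda>q. LambdaN Zb X Z q $ i $ j) (d - 1)"
  then have "\<forall>ij. \<exists>g. polyfun_le g (d - 1) \<and> (\<forall>q\<in>?S. LambdaN Zb X Z q $ fst ij $ snd ij = g q)"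
    using poly_deg_le_on_imp_polyfun_le by blast
  then obtain g where g: "\<And>i j. polyfun_le (g (i, j)) (d - 1)"
    "\<And>i j q. q \<in> ?S \<Longrightarrow> LambdaN Zb X Z q $ i $ j = g (i, j) q"
    by (metis fst_conv snd_conv)
  obtain k l w c where top: "c \<noteq> 0" "\<forall>t. R (t *s w) $ k $ l = c * t ^ d"
    using R_top_degree by blast
  define G where "G q = (Qmat ** (\<chi> i j. g (i, j) q) ** transpose Qmat) $ k $ l" for q
  have "polyfun_le G (d - 1)"
    unfolding G_def matrix_matrix_mult_def transpose_def
    by (simp, intro polyfun_le_sum polyfun_le_multc polyfun_le_cmult) (simp_all add: g(1)[simplified])
  then obtain p where p: "degree p \<le> d - 1" "\<forall>t. G (t *s (Pmat *v w)) = poly p t"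
    using polyfun_le_on_line by blast
  have "poly p t = c * t ^ d" if "invertible (CN Zb X (t *s (Pmat *v w)))" for t
  proof -
    have "(\<chi> i j. g (i, j) (t *s (Pmat *v w))) = LambdaN Zb X Z (t *s (Pmat *v w))"
      using g(2) that by (simp add: vec_eq_iff)
    also have "\<dots> = Pmat ** R (t *s w) ** transpose Pmat"
      using that by (simp add: LambdaN_change vector_scalar_commute matrix_vector_mul_assoc Qmat_Pmat)
    finally have "G (t *s (Pmat *v w)) = ((Qmat ** Pmat) ** R (t *s w) ** transpose (Qmat ** Pmat)) $ k $ l"
      by (simp add: G_def matrix_mul_assoc matrix_transpose_mul)
    then show ?thesis using p(2) top(2) by (simp add: Qmat_Pmat)
  qed
  then have "{t. invertible (CN Zb X (t *s (Pmat *v w)))} \<subseteq> {t. poly (p - monom c d) t = 0}"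
    by (simp add: subset_eq poly_monom)
  moreover have "infinite {t. invertible (CN Zb X (t *s (Pmat *v w)))}"
    by (intro CN_invertible_on_line CN_zero_invertible[OF complement X_basis])
  ultimately have "infinite {t. poly (p - monom c d) t = 0}" by (rule infinite_super)
  then have "p - monom c d = 0" using poly_roots_finite by blast
  then have "degree p = d" using top(1) by (simp add: degree_monom_eq)
  then show False using p(1) \<open>d > 0\<close> by simp
qed

lemma LambdaN_degree: "mat_poly_degree_on {q. invertible (CN Zb X q)} (LambdaN Zb X Z) d"
  unfolding mat_poly_degree_on_def using LambdaN_degree_le LambdaN_degree_not_le by blast

end

theorem (in transverse_certificate) transverse_degree: "transverse_degree TYPE('k) TYPE('p) n d"
  unfolding transverse_degree_def
proof (intro conjI allI impI)
  show "\<exists>(Z::'k \<Rightarrow> mat4) (X::'p \<Rightarrow> mat4) Zb. is_basis Z (centralizer e_nil) \<and> is_basis X n \<and> dual_part Zb Z X"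
    using Z0_basis X0_basis Zb0_dual by blast
next
  fix Z :: "'k \<Rightarrow> mat4" and X :: "'p \<Rightarrow> mat4" and Zb
  assume "is_basis Z (centralizer e_nil)" "is_basis X n" "dual_part Zb Z X"
  then have "transverse_certificate_bases n X0 Z0 Zb0 U R d Z X Zb"
    by (intro transverse_certificate_bases.intro transverse_certificate_axioms)
      (simp add: transverse_certificate_bases_axioms_def)
  then show "mat_poly_degree_on {q. invertible (CN Zb X q)} (LambdaN Zb X Z) d"
    by (rule transverse_certificate_bases.LambdaN_degree)
qed

definition mat4_of ::
  "complex \<Rightarrow> complex \<Rightarrow> complex \<Rightarrow> complex \<Rightarrow> complex
   \<Rightarrow> complex \<Rightarrow> complex \<Rightarrow> complex \<Rightarrow>
   complex \<Rightarrow> complex \<Rightarrow> complex \<Rightarrow> complex \<Rightarrow> complex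
       \<Rightarrow> complex \<Rightarrow> complex \<Rightarrow> complex \<Rightarrow> mat4" where
  "mat4_of a00 a01 a02 a03 a10 a11 a12 a13 a20 a21 a22 a23 a30 a31 a32 a33 =
    (\<chi> i j. if i = 0 then (if j = 0 then a00 else if j = 1 then a01 else if j = 2 then a02 else
        a03)
      else if i = 1 then (if j = 0 then a10 else if j = 1 then a11 else if j = 2 then a12 else a13)
      else if i = 2 then (if j = 0 then a20 else if j = 1 then a21 else if j = 2 then a22 else a23)
      else (if j = 0 then a30 else if j = 1 then a31 else if j = 2 then a32 else a33))"

lemma mat4_of_apply [simp]:
  "mat4_of a00 a01 a02 a03 a10 a11 a12 a13 a20 a21 a22 a23 a30 a31 a32 a33 $ 0 $ 0 = a00"
  "mat4_of a00 a01 a02 a03 a10 a11 a12 a13 a20 a21 a22 a23 a30 a31 a32 a33 $ 0 $ 1 = a01"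
  "mat4_of a00 a01 a02 a03 a10 a11 a12 a13 a20 a21 a22 a23 a30 a31 a32 a33 $ 0 $ 2 = a02"
  "mat4_of a00 a01 a02 a03 a10 a11 a12 a13 a20 a21 a22 a23 a30 a31 a32 a33 $ 0 $ 3 = a03"
  "mat4_of a00 a01 a02 a03 a10 a11 a12 a13 a20 a21 a22 a23 a30 a31 a32 a33 $ 1 $ 0 = a10"
  "mat4_of a00 a01 a02 a03 a10 a11 a12 a13 a20 a21 a22 a23 a30 a31 a32 a33 $ 1 $ 1 = a11"
  "mat4_of a00 a01 a02 a03 a10 a11 a12 a13 a20 a21 a22 a23 a30 a31 a32 a33 $ 1 $ 2 = a12"
  "mat4_of a00 a01 a02 a03 a10 a11 a12 a13 a20 a21 a22 a23 a30 a31 a32 a33 $ 1 $ 3 = a13"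
  "mat4_of a00 a01 a02 a03 a10 a11 a12 a13 a20 a21 a22 a23 a30 a31 a32 a33 $ 2 $ 0 = a20"
  "mat4_of a00 a01 a02 a03 a10 a11 a12 a13 a20 a21 a22 a23 a30 a31 a32 a33 $ 2 $ 1 = a21"
  "mat4_of a00 a01 a02 a03 a10 a11 a12 a13 a20 a21 a22 a23 a30 a31 a32 a33 $ 2 $ 2 = a22"
  "mat4_of a00 a01 a02 a03 a10 a11 a12 a13 a20 a21 a22 a23 a30 a31 a32 a33 $ 2 $ 3 = a23"
  "mat4_of a00 a01 a02 a03 a10 a11 a12 a13 a20 a21 a22 a23 a30 a31 a32 a33 $ 3 $ 0 = a30"
  "mat4_of a00 a01 a02 a03 a10 a11 a12 a13 a20 a21 a22 a23 a30 a31 a32 a33 $ 3 $ 1 = a31"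
  "mat4_of a00 a01 a02 a03 a10 a11 a12 a13 a20 a21 a22 a23 a30 a31 a32 a33 $ 3 $ 2 = a32"
  "mat4_of a00 a01 a02 a03 a10 a11 a12 a13 a20 a21 a22 a23 a30 a31 a32 a33 $ 3 $ 3 = a33"
  by (simp_all add: mat4_of_def)

lemma mat4_of_eq_iff:
  "mat4_of a00 a01 a02 a03 a10 a11 a12 a13 a20 a21 a22 a23 a30 a31 a32 a33 = mat4_of b00 b01 b02 b03
   b10 b11 b12 b13 b20 b21 b22 b23 b30 b31 b32 b33 \<longleftrightarrow>
    a00 = b00 \<and> a01 = b01 \<and> a02 = b02 \<and> a03 = b03 \<and> a10 = b10 \<and> a11 = b11
        \<and> a12 = b12 \<and> a13 = b13 \<and> a20 = b20 \<and> a21 = b21 \<and> a22 = b22 \<and>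
        a23 = b23 \<and> a30 = b30 \<and> a31 = b31 \<and> a32 = b32 \<and> a33 = b33"
  by (simp add: mat4_eq_iff forall_idx4)

lemma mat4_of_cases: obtains a00 a01 a02 a03 a10 a11 a12 a13 a20 a21 a22 a23 a30 a31 a32 a33 where
    "A = mat4_of a00 a01 a02 a03 a10 a11 a12 a13 a20 a21 a22 a23 a30 a31 a32 a33"
  by (rule that[of "A $ 0 $ 0" "A $ 0 $ 1" "A $ 0 $ 2" "A $ 0 $ 3" "A $ 1 $ 0" "A $ 1 $ 1" "A $ 1 $
      2" "A $ 1 $ 3" "A $ 2 $ 0" "A $ 2 $ 1" "A $ 2 $ 2" "A $ 2 $ 3" "A $ 3 $ 0" "A $ 3 $ 1" "A $ 3
      $ 2" "A $ 3 $ 3"]) (simp add: mat4_eq_iff forall_idx4)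

lemma mat4_of_add: "mat4_of a00 a01 a02 a03 a10 a11 a12 a13 a20 a21 a22 a23 a30 a31 a32 a33 +
    mat4_of b00 b01 b02 b03 b10 b11 b12 b13 b20 b21 b22 b23 b30 b31 b32 b33 = mat4_of (a00 + b00)
    (a01 + b01) (a02 + b02) (a03 + b03) (a10 + b10) (a11 + b11) (a12 + b12) (a13 + b13) (a20 + b20)
    (a21 + b21) (a22 + b22) (a23 + b23) (a30 + b30) (a31 + b31) (a32 + b32) (a33 + b33)"
  and mat4_of_diff: "mat4_of a00 a01 a02 a03 a10 a11 a12 a13 a20 a21 a22 a23 a30 a31 a32 a33 -
      mat4_of b00 b01 b02 b03 b10 b11 b12 b13 b20 b21 b22 b23 b30 b31 b32 b33 = mat4_of (a00 - b00)
      (a01 - b01) (a02 - b02) (a03 - b03) (a10 - b10) (a11 - b11) (a12 - b12) (a13 - b13) (a20 -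
      b20) (a21 - b21) (a22 - b22) (a23 - b23) (a30 - b30) (a31 - b31) (a32 - b32) (a33 - b33)"
  and smul_mat4_of: "smul c (mat4_of a00 a01 a02 a03 a10 a11 a12 a13 a20 a21 a22 a23 a30 a31 a32
      a33) = mat4_of (c * a00) (c * a01) (c * a02) (c * a03) (c * a10) (c * a11) (c * a12) (c * a13)
      (c * a20) (c * a21) (c * a22) (c * a23) (c * a30) (c * a31) (c * a32) (c * a33)"
  and zero_mat4_of: "(0::mat4) = mat4_of (0) (0) (0) (0) (0) (0) (0) (0) (0) (0) (0) (0) (0) (0) (0)
      (0)"
  by (simp_all add: mat4_eq_iff forall_idx4)

lemma matrix_mult_mat4_of: "mat4_of a00 a01 a02 a03 a10 a11 a12 a13 a20 a21 a22 a23 a30 a31 a32 a33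
    ** mat4_of b00 b01 b02 b03 b10 b11 b12 b13 b20 b21 b22 b23 b30 b31 b32 b33 = mat4_of (a00 * b00
    + a01 * b10 + a02 * b20 + a03 * b30) (a00 * b01 + a01 * b11 + a02 * b21 + a03 * b31) (a00 * b02
    + a01 * b12 + a02 * b22 + a03 * b32) (a00 * b03 + a01 * b13 + a02 * b23 + a03 * b33) (a10 * b00
    + a11 * b10 + a12 * b20 + a13 * b30) (a10 * b01 + a11 * b11 + a12 * b21 + a13 * b31) (a10 * b02
    + a11 * b12 + a12 * b22 + a13 * b32) (a10 * b03 + a11 * b13 + a12 * b23 + a13 * b33) (a20 * b00
    + a21 * b10 + a22 * b20 + a23 * b30) (a20 * b01 + a21 * b11 + a22 * b21 + a23 * b31) (a20 * b02
    + a21 * b12 + a22 * b22 + a23 * b32) (a20 * b03 + a21 * b13 + a22 * b23 + a23 * b33) (a30 * b00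
    + a31 * b10 + a32 * b20 + a33 * b30) (a30 * b01 + a31 * b11 + a32 * b21 + a33 * b31) (a30 * b02
    + a31 * b12 + a32 * b22 + a33 * b32) (a30 * b03 + a31 * b13 + a32 * b23 + a33 * b33)"
  by (simp add: mat4_eq_iff forall_idx4 matrix_mult_entry sum_idx4)

lemma brk_mat4_of: "brk (mat4_of a00 a01 a02 a03 a10 a11 a12 a13 a20 a21 a22 a23 a30 a31 a32 a33)
    (mat4_of b00 b01 b02 b03 b10 b11 b12 b13 b20 b21 b22 b23 b30 b31 b32 b33) = mat4_of (a00 * b00 +
    a01 * b10 + a02 * b20 + a03 * b30 - (b00 * a00 + b01 * a10 + b02 * a20 + b03 * a30)) (a00 * b01
    + a01 * b11 + a02 * b21 + a03 * b31 - (b00 * a01 + b01 * a11 + b02 * a21 + b03 * a31)) (a00 *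
    b02 + a01 * b12 + a02 * b22 + a03 * b32 - (b00 * a02 + b01 * a12 + b02 * a22 + b03 * a32)) (a00
    * b03 + a01 * b13 + a02 * b23 + a03 * b33 - (b00 * a03 + b01 * a13 + b02 * a23 + b03 * a33))
    (a10 * b00 + a11 * b10 + a12 * b20 + a13 * b30 - (b10 * a00 + b11 * a10 + b12 * a20 + b13 *
    a30)) (a10 * b01 + a11 * b11 + a12 * b21 + a13 * b31 - (b10 * a01 + b11 * a11 + b12 * a21 + b13
    * a31)) (a10 * b02 + a11 * b12 + a12 * b22 + a13 * b32 - (b10 * a02 + b11 * a12 + b12 * a22 +
    b13 * a32)) (a10 * b03 + a11 * b13 + a12 * b23 + a13 * b33 - (b10 * a03 + b11 * a13 + b12 * a23
    + b13 * a33)) (a20 * b00 + a21 * b10 + a22 * b20 + a23 * b30 - (b20 * a00 + b21 * a10 + b22 *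
    a20 + b23 * a30)) (a20 * b01 + a21 * b11 + a22 * b21 + a23 * b31 - (b20 * a01 + b21 * a11 + b22
    * a21 + b23 * a31)) (a20 * b02 + a21 * b12 + a22 * b22 + a23 * b32 - (b20 * a02 + b21 * a12 +
    b22 * a22 + b23 * a32)) (a20 * b03 + a21 * b13 + a22 * b23 + a23 * b33 - (b20 * a03 + b21 * a13
    + b22 * a23 + b23 * a33)) (a30 * b00 + a31 * b10 + a32 * b20 + a33 * b30 - (b30 * a00 + b31 *
    a10 + b32 * a20 + b33 * a30)) (a30 * b01 + a31 * b11 + a32 * b21 + a33 * b31 - (b30 * a01 + b31
    * a11 + b32 * a21 + b33 * a31)) (a30 * b02 + a31 * b12 + a32 * b22 + a33 * b32 - (b30 * a02 +
    b31 * a12 + b32 * a22 + b33 * a32)) (a30 * b03 + a31 * b13 + a32 * b23 + a33 * b33 - (b30 * a03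
    + b31 * a13 + b32 * a23 + b33 * a33))"
  by (simp add: brk_def matrix_mult_mat4_of mat4_of_diff)

lemma trace_mat4_of: "trace (mat4_of a00 a01 a02 a03 a10 a11 a12 a13 a20 a21 a22 a23 a30 a31 a32
    a33) = a00 + a11 + a22 + a33"
  by (simp add: trace_def sum_idx4)

lemma killing_mat4_of: "killing (mat4_of a00 a01 a02 a03 a10 a11 a12 a13 a20 a21 a22 a23 a30 a31 a32
    a33) (mat4_of b00 b01 b02 b03 b10 b11 b12 b13 b20 b21 b22 b23 b30 b31 b32 b33) =
    8 * (a00 * b00 + a01 * b10 + a02 * b20 + a03 * b30 + a10 * b01 + a11 * b11 + a12 * b21 + a13 *
        b31 + a20 * b02 + a21 * b12 + a22 * b22 + a23 * b32 + a30 * b03 + a31 * b13 + a32 * b23 +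
        a33 * b33) - 2 * (a00 + a11 + a22 + a33) * (b00 + b11 + b22 + b33)"
  by (simp add: killing_formula matrix_mult_mat4_of trace_mat4_of)

lemma Em_mat4_of: "Em i j = mat4_of (of_bool (i = 0 \<and> j = 0)) (of_bool (i = 0 \<and> j = 1))
    (of_bool (i = 0 \<and> j = 2)) (of_bool (i = 0 \<and> j = 3)) (of_bool (i = 1 \<and> j = 0))
    (of_bool (i = 1 \<and> j = 1)) (of_bool (i = 1 \<and> j = 2)) (of_bool (i = 1 \<and> j = 3))
    (of_bool (i = 2 \<and> j = 0)) (of_bool (i = 2 \<and> j = 1)) (of_bool (i = 2 \<and> j = 2))
    (of_bool (i = 2 \<and> j = 3)) (of_bool (i = 3 \<and> j = 0)) (of_bool (i = 3 \<and> j = 1))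
    (of_bool (i = 3 \<and> j = 2)) (of_bool (i = 3 \<and> j = 3))"
  by (simp add: mat4_eq_iff forall_idx4 Em_def)

definition fun5 :: "'a \<Rightarrow> 'a \<Rightarrow> 'a \<Rightarrow> 'a \<Rightarrow> 'a \<Rightarrow> 5 \<Rightarrow> 'a" where
  "fun5 a0 a1 a2 a3 a4 i =
    (if i = 0 then a0 else if i = 1 then a1 else if i = 2 then a2 else if i = 3 then a3 else a4)"

lemma fun5_simps [simp]:
  "fun5 a0 a1 a2 a3 a4 0 = a0" "fun5 a0 a1 a2 a3 a4 1 = a1" "fun5 a0 a1 a2 a3 a4 2 = a2"
  "fun5 a0 a1 a2 a3 a4 3 = a3" "fun5 a0 a1 a2 a3 a4 4 = a4"
  by (simp_all add: fun5_def)

definition fun10 :: "'a \<Rightarrow> 'a \<Rightarrow> 'a \<Rightarrow> 'a \<Rightarrow> 'a \<Rightarrow> 'a \<Rightarrow> 'a \<Rightarrow> 'a \<Rightarrow> 'a \<Rightarrow> 'a \<Rightarrow> 10 \<Rightarrow> 'a" where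
  "fun10 a0 a1 a2 a3 a4 a5 a6 a7 a8 a9 i =
    (if i = 0 then a0 else if i = 1 then a1 else if i = 2 then a2 else if i = 3 then a3
     else if i = 4 then a4 else if i = 5 then a5 else if i = 6 then a6 else if i = 7 then a7
     else if i = 8 then a8 else a9)"

lemma fun10_simps [simp]:
  "fun10 a0 a1 a2 a3 a4 a5 a6 a7 a8 a9 0 = a0" "fun10 a0 a1 a2 a3 a4 a5 a6 a7 a8 a9 1 = a1"
  "fun10 a0 a1 a2 a3 a4 a5 a6 a7 a8 a9 2 = a2" "fun10 a0 a1 a2 a3 a4 a5 a6 a7 a8 a9 3 = a3"
  "fun10 a0 a1 a2 a3 a4 a5 a6 a7 a8 a9 4 = a4" "fun10 a0 a1 a2 a3 a4 a5 a6 a7 a8 a9 5 = a5"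
  "fun10 a0 a1 a2 a3 a4 a5 a6 a7 a8 a9 6 = a6" "fun10 a0 a1 a2 a3 a4 a5 a6 a7 a8 a9 7 = a7"
  "fun10 a0 a1 a2 a3 a4 a5 a6 a7 a8 a9 8 = a8" "fun10 a0 a1 a2 a3 a4 a5 a6 a7 a8 a9 9 = a9"
  by (simp_all add: fun10_def)

lemma bij_of_nat_idx10: "bij_betw (of_nat :: nat \<Rightarrow> 10) {..<10} UNIV"
proof -
  have "{..<10::nat} = {0, 1, 2, 3, 4, 5, 6, 7, 8, 9}" by (rule set_eqI, simp) presburger
  then have image: "of_nat ` {..<10} = (UNIV :: 10 set)" using exhaust_idx10 by auto
  moreover have "card {..<10::nat} = CARD(10)" by simp
  ultimately show ?thesis
    by (simp add: bij_betw_def eq_card_imp_inj_on)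
qed

section \<open>The nilpotent element and its centraliser\<close>

lemma e_nil_mat4_of: "e_nil = mat4_of 0 1 0 0  0 0 0 1  0 0 0 0  0 0 0 0"
  by (simp add: e_nil_def Em_mat4_of mat4_of_add)

lemma h_plus_diagonal: "i \<noteq> j \<Longrightarrow> h_plus $ i $ j = 0"
  by (auto simp: h_plus_def Hr_def Em_def)

definition ge_basis :: "5 \<Rightarrow> mat4" where
  "ge_basis = fun5 (Em 0 2) (Em 0 3) e_nil (Em 2 3) (Em 0 0 + Em 1 1 - smul 3 (Em 2 2) + Em 3 3)"

lemma ge_basis_mat4_of:
  "ge_basis 0 = mat4_of 0 0 1 0  0 0 0 0  0 0 0 0  0 0 0 0"
  "ge_basis 1 = mat4_of 0 0 0 1  0 0 0 0  0 0 0 0  0 0 0 0"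
  "ge_basis 2 = mat4_of 0 1 0 0  0 0 0 1  0 0 0 0  0 0 0 0"
  "ge_basis 3 = mat4_of 0 0 0 0  0 0 0 0  0 0 0 1  0 0 0 0"
  "ge_basis 4 = mat4_of 1 0 0 0  0 1 0 0  0 0 (-3) 0  0 0 0 1"
  by (simp_all add: ge_basis_def e_nil_mat4_of Em_mat4_of smul_mat4_of mat4_of_add mat4_of_diff)

lemma is_basis_ge_basis: "is_basis ge_basis (centralizer e_nil)"
  unfolding is_basis_iff
proof (intro conjI allI impI)
  fix c :: "5 \<Rightarrow> complex" and i :: 5
  assume "(\<Sum>i\<in>UNIV. smul (c i) (ge_basis i)) = 0"
  then show "c i = 0"
    using exhaust_idx5[of i]
    by (auto simp: sum_idx5 ge_basis_mat4_of smul_mat4_of mat4_of_add zero_mat4_of mat4_of_eq_iff)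
next
  show "centralizer e_nil = span_of ge_basis"
  proof (intro set_eqI iffI)
    fix A assume "A \<in> centralizer e_nil"
    then have "trace A = 0" "brk e_nil A = 0" by (auto simp: centralizer_def sl4_def)
    moreover obtain a00 a01 a02 a03 a10 a11 a12 a13 a20 a21 a22 a23 a30 a31 a32 a33
      where A: "A = mat4_of a00 a01 a02 a03 a10 a11 a12 a13 a20 a21 a22 a23 a30 a31 a32 a33"
      by (rule mat4_of_cases)
    ultimately have "A = (\<Sum>i\<in>UNIV. smul (fun5 a02 a03 a01 a23 a00 i) (ge_basis i))"
      by (simp add: sum_idx5 ge_basis_mat4_of smul_mat4_of mat4_of_add zero_mat4_of mat4_of_eq_iff
          e_nil_mat4_of brk_mat4_of trace_mat4_of eq_neg_iff_add_eq_0 algebra_simps)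
    then show "A \<in> span_of ge_basis" unfolding span_of_def by blast
  next
    fix A assume "A \<in> span_of ge_basis"
    then show "A \<in> centralizer e_nil"
      by (auto simp: span_of_def centralizer_def sl4_def sum_idx5 ge_basis_mat4_of smul_mat4_of
          mat4_of_add zero_mat4_of mat4_of_eq_iff e_nil_mat4_of brk_mat4_of trace_mat4_of)
  qed
qed

section \<open>The complement \<open>n\<close>: degree 3\<close>

definition n_basis :: "10 \<Rightarrow> mat4" where
  "n_basis = fun10 H_a1 H_a23 X_a1 X_a2 X_ma2 X_ma1 X_ma3 X_ma12 X_ma23 X_ma123"

lemma n_basis_mat4_of:
  "n_basis 0 = mat4_of 1 0 0 0  0 (-1) 0 0  0 0 0 0  0 0 0 0"
  "n_basis 1 = mat4_of 0 0 0 0  0 1 0 0  0 0 0 0  0 0 0 (-1)"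
  "n_basis 2 = mat4_of 0 1 0 0  0 0 0 0  0 0 0 0  0 0 0 0"
  "n_basis 3 = mat4_of 0 0 0 0  0 0 1 0  0 0 0 0  0 0 0 0"
  "n_basis 4 = mat4_of 0 0 0 0  0 0 0 0  0 1 0 0  0 0 0 0"
  "n_basis 5 = mat4_of 0 0 0 0  1 0 0 0  0 0 0 0  0 0 0 0"
  "n_basis 6 = mat4_of 0 0 0 0  0 0 0 0  0 0 0 0  0 0 1 0"
  "n_basis 7 = mat4_of 0 0 0 0  0 0 0 0  1 0 0 0  0 0 0 0"
  "n_basis 8 = mat4_of 0 0 0 0  0 0 0 0  0 0 0 0  0 1 0 0"
  "n_basis 9 = mat4_of 0 0 0 0  0 0 0 0  0 0 0 0  1 0 0 0"
  by (simp_all add: n_basis_def Hr_def Em_mat4_of mat4_of_diff)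

lemma n_compl_eq_span_of: "n_compl = span_of n_basis"
  unfolding n_compl_def
proof (rule cspan_eq_span_of)
  show "bij_betw of_nat {..<length [H_a1, H_a23, X_a1, X_a2, X_ma2, X_ma1, X_ma3, X_ma12, X_ma23, X_ma123]}
      (UNIV :: 10 set)"
    using bij_of_nat_idx10 by (simp add: eval_nat_numeral)
  show "n_basis (of_nat k) = [H_a1, H_a23, X_a1, X_a2, X_ma2, X_ma1, X_ma3, X_ma12, X_ma23, X_ma123] ! k"
    if "k < length [H_a1, H_a23, X_a1, X_a2, X_ma2, X_ma1, X_ma3, X_ma12, X_ma23, X_ma123]" for k
  proof -
    have "k = 0 \<or> k = 1 \<or> k = 2 \<or> k = 3 \<or> k = 4 \<or> k = 5 \<or> k = 6 \<or> k = 7 \<or> k = 8 \<or> k = 9"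
      using that by simp presburger
    then show ?thesis by (elim disjE) (simp_all add: n_basis_def)
  qed
qed

lemma mem_n_compl:
  assumes "A \<in> sl4" "A $ 0 $ 2 = 0" "A $ 0 $ 3 = 0" "A $ 1 $ 3 = 0" "A $ 2 $ 3 = 0" "A $ 2 $ 2 = 0"
  shows "A \<in> n_compl"
proof -
  obtain a00 a01 a02 a03 a10 a11 a12 a13 a20 a21 a22 a23 a30 a31 a32 a33
    where A: "A = mat4_of a00 a01 a02 a03 a10 a11 a12 a13 a20 a21 a22 a23 a30 a31 a32 a33"
    by (rule mat4_of_cases)
  have "A = (\<Sum>i\<in>UNIV. smul (fun10 a00 (- a33) a01 a12 a21 a10 a32 a20 a31 a30 i) (n_basis i))"
    using assms by (simp add: A sl4_def trace_mat4_of sum_idx10 n_basis_mat4_of smul_mat4_of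
        mat4_of_add mat4_of_eq_iff eq_neg_iff_add_eq_0 algebra_simps)
  then show ?thesis unfolding n_compl_eq_span_of span_of_def by blast
qed

lemma is_basis_n_basis: "is_basis n_basis n_compl"
  unfolding is_basis_iff n_compl_eq_span_of
proof (intro conjI allI impI refl)
  fix c :: "10 \<Rightarrow> complex" and i :: 10
  assume "(\<Sum>i\<in>UNIV. smul (c i) (n_basis i)) = 0"
  then show "c i = 0"
    using exhaust_idx10[of i]
    by (auto simp: sum_idx10 n_basis_mat4_of smul_mat4_of mat4_of_add zero_mat4_of mat4_of_eq_iff)
qed

lemma n_basis_lincomb_in_centralizer:
  assumes "(\<Sum>i\<in>UNIV. smul (c i) (n_basis i)) \<in> centralizer e_nil"
  shows "c i = 0"
proof -
  obtain d where "(\<Sum>i\<in>UNIV. smul (c i) (n_basis i)) = (\<Sum>k\<in>UNIV. smul (d k) (ge_basis k))"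
    using basis_coord[OF is_basis_ge_basis assms] by blast
  then show ?thesis
    using exhaust_idx10[of i]
    by (auto simp: sum_idx10 sum_idx5 n_basis_mat4_of ge_basis_mat4_of smul_mat4_of mat4_of_add
        mat4_of_eq_iff)
qed

lemma sl4_decompose_n_compl:
  assumes "A \<in> sl4"
  shows "\<exists>C\<in>centralizer e_nil. A - C \<in> n_compl"
proof -
  obtain a00 a01 a02 a03 a10 a11 a12 a13 a20 a21 a22 a23 a30 a31 a32 a33
    where A: "A = mat4_of a00 a01 a02 a03 a10 a11 a12 a13 a20 a21 a22 a23 a30 a31 a32 a33"
    by (rule mat4_of_cases)
  define C where "C = (\<Sum>k\<in>UNIV. smul (fun5 a02 a03 a13 a23 (- a22 / 3) k) (ge_basis k))"
  have C: "C \<in> centralizer e_nil" unfolding C_def by (rule basis_lincomb_mem[OF is_basis_ge_basis])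
  then have "A - C \<in> sl4" using assms by (auto simp: centralizer_def intro: sl4_diff)
  moreover have "C = mat4_of (- a22 / 3) a13 a02 a03  0 (- a22 / 3) 0 a13  0 0 a22 a23  0 0 0 (- a22 / 3)"
    by (simp add: C_def sum_idx5 ge_basis_mat4_of smul_mat4_of mat4_of_add mat4_of_eq_iff)
  ultimately have "A - C \<in> n_compl" by (intro mem_n_compl) (simp_all add: A mat4_of_diff)
  with C show ?thesis by blast
qed

lemma is_complement_n_compl: "is_complement n_compl (centralizer e_nil)"
  unfolding n_compl_eq_span_of
proof (rule is_complement_spanI)
  show "n_basis i \<in> sl4" for i
    using exhaust_idx10[of i] by (auto simp: n_basis_mat4_of sl4_def trace_mat4_of)
  show "csubspace (centralizer e_nil)" "centralizer e_nil \<subseteq> sl4"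
    using is_basis_ge_basis by (auto simp: is_basis_iff csubspace_span_of centralizer_def)
next
  fix c assume "(\<Sum>i\<in>UNIV. smul (c i) (n_basis i)) \<in> centralizer e_nil"
  then have "c i = 0" for i by (rule n_basis_lincomb_in_centralizer)
  then show "(\<Sum>i\<in>UNIV. smul (c i) (n_basis i)) = 0" by simp
next
  show "A \<in> sl4 \<Longrightarrow> \<exists>C\<in>centralizer e_nil. A - C \<in> span_of n_basis" for A
    using sl4_decompose_n_compl unfolding n_compl_eq_span_of .
qed

lemma ad_invariant_n_compl: "ad_invariant h_plus n_compl"
  unfolding n_compl_eq_span_of
proof (rule ad_invariant_span_of_diagonal[OF h_plus_diagonal])
  show "\<exists>a b. n_basis i = Em a b \<or> n_basis i = Hr a b" for i
    using exhaust_idx10[of i] by (elim disjE) (simp add: n_basis_def, blast)+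
qed

definition ge_dual_n :: "5 \<Rightarrow> mat4" where
  "ge_dual_n = fun5 (smul (1/8) X_ma12) (smul (1/8) X_ma123) (smul (1/8) X_ma23) (smul (1/8) X_ma3)
     (mat4_of (1/96) 0 0 0
              0 (1/96) 0 0
              0 0 (-1/32) 0
              0 0 0 (1/96))"

lemma dual_part_ge_dual_n: "dual_part ge_dual_n ge_basis n_basis"
  unfolding dual_part_def
  by (simp add: forall_idx5 forall_idx10 ge_dual_n_def ge_basis_mat4_of n_basis_mat4_of Em_mat4_of
      smul_mat4_of sl4_def trace_mat4_of killing_mat4_of)

lemma slice_point_n:
  "slice_point ge_dual_n q =
     mat4_of (q$4 / 96)   1          0            0
             0            (q$4 / 96) 0            1
             (q$0 / 8)    0          (- q$4 / 32) 0
             (q$1 / 8)    (q$2 / 8)  (q$3 / 8)    (q$4 / 96)"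
  by (simp add: slice_point_def sum_idx5 ge_dual_n_def e_nil_mat4_of Em_mat4_of smul_mat4_of
      mat4_of_add mat4_of_eq_iff)

text \<open>The corrected elements \<open>ge_basis k + (element of n)\<close>, found by solving the linear equations
  \<open>K(x, [U q k, n_basis m]) = 0\<close>.\<close>

definition corrected_n :: "complex^5 \<Rightarrow> 5 \<Rightarrow> mat4" where
  "corrected_n q = fun5
     (mat4_of 0                      0          1                  0
              (q$0 / 12)             0          (- q$4 / 24)       0
              0                      0          0                  0
              (- q$0 * q$4 / 192)    (q$0 / 24) (q$4 * q$4 / 576)  0)
     (mat4_of (- q$2 / 12)           0          0                  1
              (q$1 / 8)              (q$2 / 24) (q$3 / 8)          0
              (- q$0 * q$4 / 192)    (q$0 / 8)  0                  0
              (q$0 * q$3 / 64)       (q$1 / 8)  (- q$3 * q$4 / 192) (q$2 / 24))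
     (mat4_of 0                      1          0                  0
              0                      0          0                  1
              (q$0 / 8)              0          0                  0
              (q$1 / 8)              (q$2 / 8)  (q$3 / 8)          0)
     (mat4_of 0                      0          0                  0
              (q$3 / 24)             0          0                  0
              (q$4 * q$4 / 576 - q$2 / 8) (- q$4 / 24) 0           1
              0                      (q$3 / 12) 0                  0)
     (ge_basis 4)"

definition bracket_n :: "complex^5 \<Rightarrow> complex^5^5" where
  "bracket_n q = (\<chi> k l. fun5
     (fun5 0 (q$0 * q$2 / 12 - q$0 * q$4 * q$4 / 576) (q$0 * q$4 / 24)
        (q$1 - q$2 * q$4 / 24 + q$4 * q$4 * q$4 / 1728) (- 4 * q$0))
     (fun5 (q$0 * q$4 * q$4 / 576 - q$0 * q$2 / 12) 0 0 (q$2 * q$3 / 12 - q$3 * q$4 * q$4 / 576) 0)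
     (fun5 (- q$0 * q$4 / 24) 0 0 (q$3 * q$4 / 24) 0)
     (fun5 (q$2 * q$4 / 24 - q$1 - q$4 * q$4 * q$4 / 1728) (q$3 * q$4 * q$4 / 576 - q$2 * q$3 / 12)
        (- q$3 * q$4 / 24) 0 (4 * q$3))
     (fun5 (4 * q$0) 0 0 (- 4 * q$3) 0) k l)"

lemma corrected_n_mem: "corrected_n q k - ge_basis k \<in> n_compl"
  using exhaust_idx5[of k]
  by (elim disjE) (intro mem_n_compl; simp add: corrected_n_def ge_basis_mat4_of mat4_of_diff
      sl4_def trace_mat4_of zero_mat4_of)+

lemma corrected_n_orth: "killing (slice_point ge_dual_n q) (brk (corrected_n q k) (n_basis m)) = 0"
proof -
  have "\<forall>k m. killing (slice_point ge_dual_n q) (brk (corrected_n q k) (n_basis m)) = 0"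
    unfolding forall_idx5 forall_idx10
    by (intro conjI; simp only: corrected_n_def fun5_simps ge_basis_mat4_of n_basis_mat4_of
        slice_point_n brk_mat4_of killing_mat4_of; simp)
  then show ?thesis by blast
qed

lemma corrected_n_brk:
  "killing (slice_point ge_dual_n q) (brk (corrected_n q k) (ge_basis l)) = bracket_n q $ k $ l"
proof -
  have "\<forall>k l. killing (slice_point ge_dual_n q) (brk (corrected_n q k) (ge_basis l)) = bracket_n q $ k $ l"
    unfolding forall_idx5
    by (intro conjI; simp only: corrected_n_def bracket_n_def vec_lambda_beta fun5_simps
        ge_basis_mat4_of slice_point_n brk_mat4_of killing_mat4_of; simp add: field_simps)
  then show ?thesis by blast
qed

lemma bracket_n_degree: "polyfun_le (\<lambda>q. bracket_n q $ k $ l) 3"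
  using exhaust_idx5[of k] exhaust_idx5[of l]
  by (elim disjE; simp add: bracket_n_def;
      intro polyfun_le.add polyfun_le_diff polyfun_le_uminus polyfun_le_divide polyfun_le_mult_var
        polyfun_le_var_pos polyfun_le.const; simp)

lemma bracket_n_top_degree: "\<exists>k l w c. c \<noteq> 0 \<and> (\<forall>t. bracket_n (t *s w) $ k $ l = c * t ^ 3)"
  by (rule exI[of _ 0], rule exI[of _ 3], rule exI[of _ "\<chi> i. if i = 4 then 1 else 0"],
      rule exI[of _ "1/1728"]) (simp add: bracket_n_def power3_eq_cube)

lemma transverse_certificate_n:
  "transverse_certificate n_compl n_basis ge_basis ge_dual_n corrected_n bracket_n 3"
  by unfold_locales (rule is_basis_ge_basis is_basis_n_basis is_complement_n_compl dual_part_ge_dual_n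
      corrected_n_mem corrected_n_orth corrected_n_brk bracket_n_degree bracket_n_top_degree)+

section \<open>The complement \<open>n'\<close>: degree 2\<close>

definition n'_basis :: "10 \<Rightarrow> mat4" where
  "n'_basis = fun10 H_a1 H_a2 X_a1 X_a2 X_ma2 X_ma1 X_ma3 X_ma12 X_ma23 X_ma123"

lemma n'_basis_mat4_of:
  "n'_basis 0 = mat4_of 1 0 0 0  0 (-1) 0 0  0 0 0 0  0 0 0 0"
  "n'_basis 1 = mat4_of 0 0 0 0  0 1 0 0  0 0 (-1) 0  0 0 0 0"
  "n'_basis 2 = mat4_of 0 1 0 0  0 0 0 0  0 0 0 0  0 0 0 0"
  "n'_basis 3 = mat4_of 0 0 0 0  0 0 1 0  0 0 0 0  0 0 0 0"
  "n'_basis 4 = mat4_of 0 0 0 0  0 0 0 0  0 1 0 0  0 0 0 0"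
  "n'_basis 5 = mat4_of 0 0 0 0  1 0 0 0  0 0 0 0  0 0 0 0"
  "n'_basis 6 = mat4_of 0 0 0 0  0 0 0 0  0 0 0 0  0 0 1 0"
  "n'_basis 7 = mat4_of 0 0 0 0  0 0 0 0  1 0 0 0  0 0 0 0"
  "n'_basis 8 = mat4_of 0 0 0 0  0 0 0 0  0 0 0 0  0 1 0 0"
  "n'_basis 9 = mat4_of 0 0 0 0  0 0 0 0  0 0 0 0  1 0 0 0"
  by (simp_all add: n'_basis_def Hr_def Em_mat4_of mat4_of_diff)

lemma n_compl'_eq_span_of: "n_compl' = span_of n'_basis"
  unfolding n_compl'_def
proof (rule cspan_eq_span_of)
  show "bij_betw of_nat {..<length [H_a1, H_a2, X_a1, X_a2, X_ma2, X_ma1, X_ma3, X_ma12, X_ma23, X_ma123]}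
      (UNIV :: 10 set)"
    using bij_of_nat_idx10 by (simp add: eval_nat_numeral)
  show "n'_basis (of_nat k) = [H_a1, H_a2, X_a1, X_a2, X_ma2, X_ma1, X_ma3, X_ma12, X_ma23, X_ma123] ! k"
    if "k < length [H_a1, H_a2, X_a1, X_a2, X_ma2, X_ma1, X_ma3, X_ma12, X_ma23, X_ma123]" for k
  proof -
    have "k = 0 \<or> k = 1 \<or> k = 2 \<or> k = 3 \<or> k = 4 \<or> k = 5 \<or> k = 6 \<or> k = 7 \<or> k = 8 \<or> k = 9"
      using that by simp presburger
    then show ?thesis by (elim disjE) (simp_all add: n'_basis_def)
  qed
qed

lemma mem_n_compl':
  assumes "A \<in> sl4" "A $ 0 $ 2 = 0" "A $ 0 $ 3 = 0" "A $ 1 $ 3 = 0" "A $ 2 $ 3 = 0" "A $ 3 $ 3 = 0"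
  shows "A \<in> n_compl'"
proof -
  obtain a00 a01 a02 a03 a10 a11 a12 a13 a20 a21 a22 a23 a30 a31 a32 a33
    where A: "A = mat4_of a00 a01 a02 a03 a10 a11 a12 a13 a20 a21 a22 a23 a30 a31 a32 a33"
    by (rule mat4_of_cases)
  have "A = (\<Sum>i\<in>UNIV. smul (fun10 a00 (- a22) a01 a12 a21 a10 a32 a20 a31 a30 i) (n'_basis i))"
    using assms by (simp add: A sl4_def trace_mat4_of sum_idx10 n'_basis_mat4_of smul_mat4_of
        mat4_of_add mat4_of_eq_iff eq_neg_iff_add_eq_0 algebra_simps)
  then show ?thesis unfolding n_compl'_eq_span_of span_of_def by blast
qed

lemma is_basis_n'_basis: "is_basis n'_basis n_compl'"
  unfolding is_basis_iff n_compl'_eq_span_of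
proof (intro conjI allI impI refl)
  fix c :: "10 \<Rightarrow> complex" and i :: 10
  assume "(\<Sum>i\<in>UNIV. smul (c i) (n'_basis i)) = 0"
  then show "c i = 0"
    using exhaust_idx10[of i]
    by (auto simp: sum_idx10 n'_basis_mat4_of smul_mat4_of mat4_of_add zero_mat4_of mat4_of_eq_iff)
qed

lemma n'_basis_lincomb_in_centralizer:
  assumes "(\<Sum>i\<in>UNIV. smul (c i) (n'_basis i)) \<in> centralizer e_nil"
  shows "c i = 0"
proof -
  obtain d where "(\<Sum>i\<in>UNIV. smul (c i) (n'_basis i)) = (\<Sum>k\<in>UNIV. smul (d k) (ge_basis k))"
    using basis_coord[OF is_basis_ge_basis assms] by blast
  then show ?thesis
    using exhaust_idx10[of i]
    by (auto simp: sum_idx10 sum_idx5 n'_basis_mat4_of ge_basis_mat4_of smul_mat4_of mat4_of_add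
        mat4_of_eq_iff)
qed

lemma sl4_decompose_n_compl':
  assumes "A \<in> sl4"
  shows "\<exists>C\<in>centralizer e_nil. A - C \<in> n_compl'"
proof -
  obtain a00 a01 a02 a03 a10 a11 a12 a13 a20 a21 a22 a23 a30 a31 a32 a33
    where A: "A = mat4_of a00 a01 a02 a03 a10 a11 a12 a13 a20 a21 a22 a23 a30 a31 a32 a33"
    by (rule mat4_of_cases)
  define C where "C = (\<Sum>k\<in>UNIV. smul (fun5 a02 a03 a13 a23 a33 k) (ge_basis k))"
  have C: "C \<in> centralizer e_nil" unfolding C_def by (rule basis_lincomb_mem[OF is_basis_ge_basis])
  then have "A - C \<in> sl4" using assms by (auto simp: centralizer_def intro: sl4_diff)
  moreover have "C = mat4_of a33 a13 a02 a03  0 a33 0 a13  0 0 (- 3 * a33) a23  0 0 0 a33"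
    by (simp add: C_def sum_idx5 ge_basis_mat4_of smul_mat4_of mat4_of_add mat4_of_eq_iff)
  ultimately have "A - C \<in> n_compl'" by (intro mem_n_compl') (simp_all add: A mat4_of_diff)
  with C show ?thesis by blast
qed

lemma is_complement_n_compl': "is_complement n_compl' (centralizer e_nil)"
  unfolding n_compl'_eq_span_of
proof (rule is_complement_spanI)
  show "n'_basis i \<in> sl4" for i
    using exhaust_idx10[of i] by (auto simp: n'_basis_mat4_of sl4_def trace_mat4_of)
  show "csubspace (centralizer e_nil)" "centralizer e_nil \<subseteq> sl4"
    using is_basis_ge_basis by (auto simp: is_basis_iff csubspace_span_of centralizer_def)
next
  fix c assume "(\<Sum>i\<in>UNIV. smul (c i) (n'_basis i)) \<in> centralizer e_nil"
  then have "c i = 0" for i by (rule n'_basis_lincomb_in_centralizer)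
  then show "(\<Sum>i\<in>UNIV. smul (c i) (n'_basis i)) = 0" by simp
next
  show "A \<in> sl4 \<Longrightarrow> \<exists>C\<in>centralizer e_nil. A - C \<in> span_of n'_basis" for A
    using sl4_decompose_n_compl' unfolding n_compl'_eq_span_of .
qed

lemma ad_invariant_n_compl': "ad_invariant h_plus n_compl'"
  unfolding n_compl'_eq_span_of
proof (rule ad_invariant_span_of_diagonal[OF h_plus_diagonal])
  show "\<exists>a b. n'_basis i = Em a b \<or> n'_basis i = Hr a b" for i
    using exhaust_idx10[of i] by (elim disjE) (simp add: n'_basis_def, blast)+
qed

definition ge_dual_n' :: "5 \<Rightarrow> mat4" where
  "ge_dual_n' = fun5 (smul (1/8) X_ma12) (smul (1/8) X_ma123) (smul (1/8) X_ma23) (smul (1/8) X_ma3)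
     (mat4_of (-1/32) 0 0 0
              0 (-1/32) 0 0
              0 0 (-1/32) 0
              0 0 0 (3/32))"

lemma dual_part_ge_dual_n': "dual_part ge_dual_n' ge_basis n'_basis"
  unfolding dual_part_def
  by (simp add: forall_idx5 forall_idx10 ge_dual_n'_def ge_basis_mat4_of n'_basis_mat4_of Em_mat4_of
      smul_mat4_of sl4_def trace_mat4_of killing_mat4_of)

lemma slice_point_n':
  "slice_point ge_dual_n' q =
     mat4_of (- q$4 / 32) 1            0            0
             0            (- q$4 / 32) 0            1
             (q$0 / 8)    0            (- q$4 / 32) 0
             (q$1 / 8)    (q$2 / 8)    (q$3 / 8)    (3 * q$4 / 32)"
  by (simp add: slice_point_def sum_idx5 ge_dual_n'_def e_nil_mat4_of Em_mat4_of smul_mat4_of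
      mat4_of_add mat4_of_eq_iff)

text \<open>The corrected elements \<open>ge_basis k + (element of n)\<close>, found by solving the linear equations
  \<open>K(x, [U q k, n'_basis m]) = 0\<close>.\<close>

definition corrected_n' :: "complex^5 \<Rightarrow> 5 \<Rightarrow> mat4" where
  "corrected_n' q = fun5
     (mat4_of 0                   0            1           0
              (q$0 / 4)           0            0           0
              0                   0            0           0
              0                   (3 * q$0 / 8) 0          0)
     (mat4_of (- q$2 / 8)         (- q$4 / 8)  0           1
              (q$1 / 8)           0            (q$3 / 8)   0
              (- q$0 * q$4 / 64)  (q$0 / 8)    (q$2 / 8)   0
              (q$0 * q$3 / 64)    (q$1 / 8)    0           0)
     (mat4_of (- q$4 / 8)         1            0           0
              0                   (- q$4 / 8)  0           1
              (q$0 / 8)           0            (q$4 / 4)   0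
              (q$1 / 8)           (q$2 / 8)    (q$3 / 8)   0)
     (mat4_of 0                   0            0           0
              (- q$3 / 8)         0            0           0
              (- q$2 / 8)         (- q$4 / 8)  0           1
              0                   (- q$3 / 4)  0           0)
     (ge_basis 4)"

definition bracket_n' :: "complex^5 \<Rightarrow> complex^5^5" where
  "bracket_n' q = (\<chi> k l. fun5
     (fun5 0 (q$0 * q$2 / 4) (3 * q$0 * q$4 / 8) (q$1) (- 4 * q$0))
     (fun5 (- q$0 * q$2 / 4) 0 0 (q$2 * q$3 / 4) 0)
     (fun5 (- 3 * q$0 * q$4 / 8) 0 0 (3 * q$3 * q$4 / 8) 0)
     (fun5 (- q$1) (- q$2 * q$3 / 4) (- 3 * q$3 * q$4 / 8) 0 (4 * q$3))
     (fun5 (4 * q$0) 0 0 (- 4 * q$3) 0) k l)"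

lemma corrected_n'_mem: "corrected_n' q k - ge_basis k \<in> n_compl'"
  using exhaust_idx5[of k]
  by (elim disjE) (intro mem_n_compl'; simp add: corrected_n'_def ge_basis_mat4_of mat4_of_diff
      sl4_def trace_mat4_of zero_mat4_of)+

lemma corrected_n'_orth: "killing (slice_point ge_dual_n' q) (brk (corrected_n' q k) (n'_basis m)) = 0"
proof -
  have "\<forall>k m. killing (slice_point ge_dual_n' q) (brk (corrected_n' q k) (n'_basis m)) = 0"
    unfolding forall_idx5 forall_idx10
    by (intro conjI; simp only: corrected_n'_def fun5_simps ge_basis_mat4_of n'_basis_mat4_of
        slice_point_n' brk_mat4_of killing_mat4_of; simp)
  then show ?thesis by blast
qed

lemma corrected_n'_brk:
  "killing (slice_point ge_dual_n' q) (brk (corrected_n' q k) (ge_basis l)) = bracket_n' q $ k $ l"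
proof -
  have "\<forall>k l. killing (slice_point ge_dual_n' q) (brk (corrected_n' q k) (ge_basis l)) = bracket_n' q $ k $ l"
    unfolding forall_idx5
    by (intro conjI; simp only: corrected_n'_def bracket_n'_def vec_lambda_beta fun5_simps
        ge_basis_mat4_of slice_point_n' brk_mat4_of killing_mat4_of; simp add: field_simps)
  then show ?thesis by blast
qed

lemma bracket_n'_degree: "polyfun_le (\<lambda>q. bracket_n' q $ k $ l) 2"
  using exhaust_idx5[of k] exhaust_idx5[of l]
  by (elim disjE; simp add: bracket_n'_def;
      intro polyfun_le.add polyfun_le_diff polyfun_le_uminus polyfun_le_divide polyfun_le_mult_var
        polyfun_le_var_pos polyfun_le.const; simp)

lemma bracket_n'_top_degree: "\<exists>k l w c. c \<noteq> 0 \<and> (\<forall>t. bracket_n' (t *s w) $ k $ l = c * t ^ 2)"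
  by (rule exI[of _ 0], rule exI[of _ 1], rule exI[of _ "\<chi> i. if i = 0 \<or> i = 2 then 1 else 0"],
      rule exI[of _ "1/4"]) (simp add: bracket_n'_def power2_eq_square)

lemma transverse_certificate_n':
  "transverse_certificate n_compl' n'_basis ge_basis ge_dual_n' corrected_n' bracket_n' 2"
  by unfold_locales (rule is_basis_ge_basis is_basis_n'_basis is_complement_n_compl' dual_part_ge_dual_n'
      corrected_n'_mem corrected_n'_orth corrected_n'_brk bracket_n'_degree bracket_n'_top_degree)+

theorem mainTheorem6:
  shows "is_complement n_compl (centralizer e_nil) \<and> ad_invariant h_plus n_compl \<and>
         is_complement n_compl' (centralizer e_nil) \<and> ad_invariant h_plus n_compl' \<and>
         transverse_degree TYPE(5) TYPE(10) n_compl 3 \<and>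
         transverse_degree TYPE(5) TYPE(10) n_compl' 2"
  using is_complement_n_compl ad_invariant_n_compl is_complement_n_compl' ad_invariant_n_compl'
    transverse_certificate.transverse_degree[OF transverse_certificate_n]
    transverse_certificate.transverse_degree[OF transverse_certificate_n']
  by blast

end
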